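(* Let $\mathbf t:\mathcal D\to\mathcal T$ be a refinement system, $c:A\to B$ in $\mathcal T$, and $P\sqsubset A$. If the pushforward $c_!P$ exists in $\mathbf t$, then there are natural isomorphisms of presheaves on $B^{+}$: (a) $(c_!P)^{+}\cong{}^{\perp_B}\big((c^{-})^*P^{-}\big)$; (b) $(c_!P)^{+}\cong{}^{\perp_B}\Big(\big((c^{+})_!P^{+}\big)^{\perp_B}\Big)$.
   Context: A refinement system is a functor $\mathbf{t}:\mathcal{D}\to\mathcal{T}$; composition is diagrammatic. Write $P\sqsubset A$ if $\mathbf t(P)=A$; a derivation of $P\Rightarrow_cQ$ is a morphism $\alpha:P\to Q$ with $\mathbf t(\alpha)=c$. A pushforward of $P\sqsubset A$ along $c:A\to B$ is $c_!P\sqsubset B$ with a derivation $\kappa$ of $P\Rightarrow_cc_!P$ such that pre-composition with $\kappa$ is a bijection from derivations of $c_!P\Rightarrow_dQ$ to derivations of $P\Rightarrow_{c;d}Q$ for all $Q\sqsubset Y$, $d:B\to Y$. For $B\in\mathcal T$: $B^{+}$ has objects $(P,c)$, $P\sqsubset X$, $c:X\to B$, morphisms $(P_1,c_1)\to(P_2,c_2)$ the derivations of $P_1\Rightarrow_eP_2$ with $c_1=e;c_2$; $B^{-}$ is the opposite of the category with objects $(d,R)$, $d:B\to Y$, $R\sqsubset Y$, morphisms $(d_1,R_1)\to(d_2,R_2)$ the derivations of $R_1\Rightarrow_eR_2$ with $d_1;e=d_2$. For $Q\sqsubset B$: $Q^{+}:(B^{+})^{op}\to\mathbf{Set}$, $(P,c)\mapsto$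 derivations of $P\Rightarrow_cQ$ (acting by precomposition), and $Q^{-}:(B^{-})^{op}\to\mathbf{Set}$, $(d,R)\mapsto$ derivations of $Q\Rightarrow_dR$ (acting by postcomposition). For $c:A\to B$: $c^{+}:A^{+}\to B^{+}$, $(P,e)\mapsto(P,e;c)$; $c^{-}:B^{-}\to A^{-}$, $(d,R)\mapsto(c;d,R)$. $\mathrm{Jdg}(\mathbf t)$ has objects $(P,c,R)$ and morphisms $(P_1,c_1,R_1)\to(P_2,c_2,R_2)$ pairs of derivations $\beta$ of $P_1\Rightarrow_eP_2$, $\gamma$ of $R_2\Rightarrow_{e'}R_1$ with $c_1=e;c_2;e'$; $\mathrm{Der}$ sends $(P,c,R)$ to the set of derivations of $P\Rightarrow_cR$ and $(\beta,\gamma)$ to $\alpha\mapsto\beta;\alpha;\gamma$. Bracket $\langle-\mid-\rangle_B:B^{+}\times B^{-}\to\mathrm{Jdg}(\mathbf t)$: $((P,c),(d,R))\mapsto(P,c;d,R)$. Duals: for $\phi$ on $B^{+}$, $\phi^{\perp_B}(y)=$ natural transformations $\phi\Rightarrow\mathrm{Der}(\langle-\mid y\rangle_B)$ (presheaf on $B^{-}$); for $\psi$ on $B^{-}$, ${}^{\perp_B}\psi(x)=$ natural transformations $\psi\Rightarrow\mathrm{Der}(\langle x\mid-\rangle_B)$ (presheaf on $B^{+}$). For a functor $F:\mathcal X\to\mathcal Y$: $F^*\psi=\psi\circ F^{op}$ and $F_!\chi(y)=\int^{x}\mathcal Y(y,Fx)\times\chi(x)$. *)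

theory Defs
  imports Main
begin

text \<open>Composition is diagrammatic: cCmp C f g means f;g (first f, then g).\<close>

record ('o, 'm) cat =
  cOb  :: "'o set"
  cAr  :: "'m set"
  cDom :: "'m \<Rightarrow> 'o"
  cCod :: "'m \<Rightarrow> 'o"
  cId  :: "'o \<Rightarrow> 'm"
  cCmp :: "'m \<Rightarrow> 'm \<Rightarrow> 'm"

definition is_category :: "('o, 'm, 'z) cat_scheme \<Rightarrow> bool" where
  "is_category C \<longleftrightarrow>
     (\<forall>f\<in>cAr C. cDom C f \<in> cOb C \<and> cCod C f \<in> cOb C)
   \<and> (\<forall>a\<in>cOb C. cId C a \<in> cAr C \<and> cDom C (cId C a) = a \<and> cCod C (cId C a) = a)
   \<and> (\<forall>f\<in>cAr C. \<forall>g\<in>cAr C. cCod C f = cDom C g \<longrightarrow>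
        cCmp C f g \<in> cAr C \<and> cDom C (cCmp C f g) = cDom C f \<and> cCod C (cCmp C f g) = cCod C g)
   \<and> (\<forall>f\<in>cAr C. cCmp C (cId C (cDom C f)) f = f \<and> cCmp C f (cId C (cCod C f)) = f)
   \<and> (\<forall>f\<in>cAr C. \<forall>g\<in>cAr C. \<forall>h\<in>cAr C. cCod C f = cDom C g \<longrightarrow> cCod C g = cDom C h \<longrightarrow>
        cCmp C (cCmp C f g) h = cCmp C f (cCmp C g h))"

definition is_functor ::
  "('o1, 'm1, 'z1) cat_scheme \<Rightarrow> ('o2, 'm2, 'z2) cat_scheme \<Rightarrow>
   ('o1 \<Rightarrow> 'o2) \<Rightarrow> ('m1 \<Rightarrow> 'm2) \<Rightarrow> bool" where
  "is_functor C D Fo Fa \<longleftrightarrow>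
     (\<forall>a\<in>cOb C. Fo a \<in> cOb D)
   \<and> (\<forall>f\<in>cAr C. Fa f \<in> cAr D \<and> cDom D (Fa f) = Fo (cDom C f) \<and> cCod D (Fa f) = Fo (cCod C f))
   \<and> (\<forall>a\<in>cOb C. Fa (cId C a) = cId D (Fo a))
   \<and> (\<forall>f\<in>cAr C. \<forall>g\<in>cAr C. cCod C f = cDom C g \<longrightarrow> Fa (cCmp C f g) = cCmp D (Fa f) (Fa g))"

text \<open>A presheaf (Set-valued contravariant functor) on a category C:
  psh_ob x is a set, and for an arrow g, psh_ar g maps psh_ob (cod g) to psh_ob (dom g).\<close>

record ('o, 'm, 'x) psh =
  psh_ob :: "'o \<Rightarrow> 'x set"
  psh_ar :: "'m \<Rightarrow> 'x \<Rightarrow> 'x"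

definition nat_iso :: "('o, 'm, 'z) cat_scheme \<Rightarrow> ('o, 'm, 'x) psh \<Rightarrow> ('o, 'm, 'y) psh \<Rightarrow> bool" where
  "nat_iso C F G \<longleftrightarrow> (\<exists>\<eta> :: 'o \<Rightarrow> 'x \<Rightarrow> 'y.
     (\<forall>x\<in>cOb C. bij_betw (\<eta> x) (psh_ob F x) (psh_ob G x))
   \<and> (\<forall>g\<in>cAr C. \<forall>a\<in>psh_ob F (cCod C g).
        \<eta> (cDom C g) (psh_ar F g a) = psh_ar G g (\<eta> (cCod C g) a)))"

definition nat_trans :: "('o, 'm, 'z) cat_scheme \<Rightarrow> ('o, 'm, 'x) psh \<Rightarrow> ('o, 'm, 'y) psh
    \<Rightarrow> ('o \<Rightarrow> 'x \<Rightarrow> 'y) set" where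
  "nat_trans C F G = {\<theta>.
     (\<forall>x\<in>cOb C. \<forall>a\<in>psh_ob F x. \<theta> x a \<in> psh_ob G x)
   \<and> (\<forall>g\<in>cAr C. \<forall>a\<in>psh_ob F (cCod C g).
        \<theta> (cDom C g) (psh_ar F g a) = psh_ar G g (\<theta> (cCod C g) a))
   \<and> (\<forall>x a. (x \<notin> cOb C \<or> a \<notin> psh_ob F x) \<longrightarrow> \<theta> x a = undefined)}"

definition pb_psh :: "('o1 \<Rightarrow> 'o2) \<Rightarrow> ('m1 \<Rightarrow> 'm2) \<Rightarrow> ('o2, 'm2, 'x) psh \<Rightarrow> ('o1, 'm1, 'x) psh" where
  "pb_psh Fo Fa \<psi> = \<lparr> psh_ob = (\<lambda>x. psh_ob \<psi> (Fo x)), psh_ar = (\<lambda>g. psh_ar \<psi> (Fa g)) \<rparr>"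

text \<open>Left Kan extension F_! chi (y) = coend over x of Y(y, F x) \<times> chi(x), computed in Set:
  triples (x, f, a) modulo the equivalence relation generated by
  (x, f, chi(g) a') ~ (x', f;F(g), a') for g : x \<rightarrow> x'.\<close>

definition lan_carrier ::
  "('o1, 'm1, 'z1) cat_scheme \<Rightarrow> ('o2, 'm2, 'z2) cat_scheme \<Rightarrow> ('o1 \<Rightarrow> 'o2) \<Rightarrow>
   ('o1, 'm1, 'x) psh \<Rightarrow> 'o2 \<Rightarrow> ('o1 \<times> 'm2 \<times> 'x) set" where
  "lan_carrier C1 C2 Fo \<chi> y = {(x, f, a). x \<in> cOb C1 \<and> f \<in> cAr C2 \<and> cDom C2 f = y
      \<and> cCod C2 f = Fo x \<and> a \<in> psh_ob \<chi> x}"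

definition lan_gen ::
  "('o1, 'm1, 'z1) cat_scheme \<Rightarrow> ('o2, 'm2, 'z2) cat_scheme \<Rightarrow> ('o1 \<Rightarrow> 'o2) \<Rightarrow> ('m1 \<Rightarrow> 'm2) \<Rightarrow>
   ('o1, 'm1, 'x) psh \<Rightarrow> 'o2 \<Rightarrow> (('o1 \<times> 'm2 \<times> 'x) \<times> ('o1 \<times> 'm2 \<times> 'x)) set" where
  "lan_gen C1 C2 Fo Fa \<chi> y = {((cDom C1 g, f, psh_ar \<chi> g a'), (cCod C1 g, cCmp C2 f (Fa g), a')) | g f a'.
      g \<in> cAr C1 \<and> f \<in> cAr C2 \<and> cDom C2 f = y \<and> cCod C2 f = Fo (cDom C1 g)
      \<and> a' \<in> psh_ob \<chi> (cCod C1 g)}"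

definition lan_equiv ::
  "('o1, 'm1, 'z1) cat_scheme \<Rightarrow> ('o2, 'm2, 'z2) cat_scheme \<Rightarrow> ('o1 \<Rightarrow> 'o2) \<Rightarrow> ('m1 \<Rightarrow> 'm2) \<Rightarrow>
   ('o1, 'm1, 'x) psh \<Rightarrow> 'o2 \<Rightarrow> (('o1 \<times> 'm2 \<times> 'x) \<times> ('o1 \<times> 'm2 \<times> 'x)) set" where
  "lan_equiv C1 C2 Fo Fa \<chi> y =
     Id_on (lan_carrier C1 C2 Fo \<chi> y) \<union> (lan_gen C1 C2 Fo Fa \<chi> y \<union> (lan_gen C1 C2 Fo Fa \<chi> y)\<inverse>)\<^sup>+"

definition lan_psh ::
  "('o1, 'm1, 'z1) cat_scheme \<Rightarrow> ('o2, 'm2, 'z2) cat_scheme \<Rightarrow> ('o1 \<Rightarrow> 'o2) \<Rightarrow> ('m1 \<Rightarrow> 'm2) \<Rightarrow>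
   ('o1, 'm1, 'x) psh \<Rightarrow> ('o2, 'm2, ('o1 \<times> 'm2 \<times> 'x) set) psh" where
  "lan_psh C1 C2 Fo Fa \<chi> =
     \<lparr> psh_ob = (\<lambda>y. lan_carrier C1 C2 Fo \<chi> y // lan_equiv C1 C2 Fo Fa \<chi> y),
       psh_ar = (\<lambda>h cls. lan_equiv C1 C2 Fo Fa \<chi> (cDom C2 h) ``
                          ((\<lambda>(x, f, a). (x, cCmp C2 h f, a)) ` cls)) \<rparr>"

definition refinement_system ::
  "('do, 'dm, 'z1) cat_scheme \<Rightarrow> ('to, 'tm, 'z2) cat_scheme \<Rightarrow> ('do \<Rightarrow> 'to) \<Rightarrow> ('dm \<Rightarrow> 'tm) \<Rightarrow> bool" where
  "refinement_system D T tO tA \<longleftrightarrow> is_category D \<and> is_category T \<and> is_functor D T tO tA"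

definition der :: "('do, 'dm, 'z1) cat_scheme \<Rightarrow> ('dm \<Rightarrow> 'tm) \<Rightarrow> 'do \<Rightarrow> 'tm \<Rightarrow> 'do \<Rightarrow> 'dm set" where
  "der D tA P c Q = {\<alpha> \<in> cAr D. cDom D \<alpha> = P \<and> cCod D \<alpha> = Q \<and> tA \<alpha> = c}"

definition is_pushforward ::
  "('do, 'dm, 'z1) cat_scheme \<Rightarrow> ('to, 'tm, 'z2) cat_scheme \<Rightarrow> ('do \<Rightarrow> 'to) \<Rightarrow> ('dm \<Rightarrow> 'tm) \<Rightarrow>
   'do \<Rightarrow> 'tm \<Rightarrow> 'do \<Rightarrow> 'dm \<Rightarrow> bool" where
  "is_pushforward D T tO tA P c Pc \<kappa> \<longleftrightarrow>
     Pc \<in> cOb D \<and> tO Pc = cCod T c \<and> \<kappa> \<in> der D tA P c Pc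
   \<and> (\<forall>Q\<in>cOb D. \<forall>d\<in>cAr T. cDom T d = cCod T c \<longrightarrow> cCod T d = tO Q \<longrightarrow>
        bij_betw (\<lambda>\<beta>. cCmp D \<kappa> \<beta>) (der D tA Pc d Q) (der D tA P (cCmp T c d) Q))"

text \<open>The category B^+. An arrow (x1, beta, x2) : x1 \<rightarrow> x2 is a derivation beta of
  P1 \<Rightarrow>_e P2 with c1 = e;c2 (endpoints recorded explicitly).\<close>

definition plus_cat ::
  "('do, 'dm, 'z1) cat_scheme \<Rightarrow> ('to, 'tm, 'z2) cat_scheme \<Rightarrow> ('do \<Rightarrow> 'to) \<Rightarrow> ('dm \<Rightarrow> 'tm) \<Rightarrow> 'to \<Rightarrow>
   ('do \<times> 'tm, ('do \<times> 'tm) \<times> 'dm \<times> ('do \<times> 'tm)) cat" where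
  "plus_cat D T tO tA B = (let Obs = {(P, c). P \<in> cOb D \<and> c \<in> cAr T \<and> cDom T c = tO P \<and> cCod T c = B} in
     \<lparr> cOb = Obs,
       cAr = {(x1, \<beta>, x2). x1 \<in> Obs \<and> x2 \<in> Obs \<and> \<beta> \<in> der D tA (fst x1) (tA \<beta>) (fst x2)
                           \<and> snd x1 = cCmp T (tA \<beta>) (snd x2)},
       cDom = (\<lambda>(x1, \<beta>, x2). x1),
       cCod = (\<lambda>(x1, \<beta>, x2). x2),
       cId = (\<lambda>x. (x, cId D (fst x), x)),
       cCmp = (\<lambda>(x1, \<beta>, x2) (y1, \<beta>', y2). (x1, cCmp D \<beta> \<beta>', y2)) \<rparr>)"

text \<open>The category B^-, the opposite of the category of pairs (d, R).
  An underlying arrow gamma : (d1,R1) \<rightarrow> (d2,R2) (a derivation of R1 \<Rightarrow>_e R2 with d1;e = d2)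
  is recorded as (y1, gamma, y2); as an arrow of B^- it goes from y2 to y1.\<close>

definition minus_cat ::
  "('do, 'dm, 'z1) cat_scheme \<Rightarrow> ('to, 'tm, 'z2) cat_scheme \<Rightarrow> ('do \<Rightarrow> 'to) \<Rightarrow> ('dm \<Rightarrow> 'tm) \<Rightarrow> 'to \<Rightarrow>
   ('tm \<times> 'do, ('tm \<times> 'do) \<times> 'dm \<times> ('tm \<times> 'do)) cat" where
  "minus_cat D T tO tA B = (let Obs = {(d, R). d \<in> cAr T \<and> cDom T d = B \<and> R \<in> cOb D \<and> cCod T d = tO R} in
     \<lparr> cOb = Obs,
       cAr = {(y1, \<gamma>, y2). y1 \<in> Obs \<and> y2 \<in> Obs \<and> \<gamma> \<in> der D tA (snd y1) (tA \<gamma>) (snd y2)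
                           \<and> cCmp T (fst y1) (tA \<gamma>) = fst y2},
       cDom = (\<lambda>(y1, \<gamma>, y2). y2),
       cCod = (\<lambda>(y1, \<gamma>, y2). y1),
       cId = (\<lambda>y. (y, cId D (snd y), y)),
       cCmp = (\<lambda>(u1, \<gamma>1, u2) (v1, \<gamma>2, v2). (v1, cCmp D \<gamma>2 \<gamma>1, u2)) \<rparr>)"

definition plus_psh :: "('do, 'dm, 'z1) cat_scheme \<Rightarrow> ('dm \<Rightarrow> 'tm) \<Rightarrow> 'do \<Rightarrow>
    ('do \<times> 'tm, ('do \<times> 'tm) \<times> 'dm \<times> ('do \<times> 'tm), 'dm) psh" where
  "plus_psh D tA Q = \<lparr> psh_ob = (\<lambda>(P, c). der D tA P c Q),
                       psh_ar = (\<lambda>(x1, \<beta>, x2) \<alpha>. cCmp D \<beta> \<alpha>) \<rparr>"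

definition minus_psh :: "('do, 'dm, 'z1) cat_scheme \<Rightarrow> ('dm \<Rightarrow> 'tm) \<Rightarrow> 'do \<Rightarrow>
    ('tm \<times> 'do, ('tm \<times> 'do) \<times> 'dm \<times> ('tm \<times> 'do), 'dm) psh" where
  "minus_psh D tA Q = \<lparr> psh_ob = (\<lambda>(d, R). der D tA Q d R),
                        psh_ar = (\<lambda>(y1, \<gamma>, y2) \<alpha>. cCmp D \<alpha> \<gamma>) \<rparr>"

definition cplus_ob :: "('to, 'tm, 'z2) cat_scheme \<Rightarrow> 'tm \<Rightarrow> 'do \<times> 'tm \<Rightarrow> 'do \<times> 'tm" where
  "cplus_ob T c = (\<lambda>(P, e). (P, cCmp T e c))"

definition cplus_ar :: "('to, 'tm, 'z2) cat_scheme \<Rightarrow> 'tm \<Rightarrow>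
    ('do \<times> 'tm) \<times> 'dm \<times> ('do \<times> 'tm) \<Rightarrow> ('do \<times> 'tm) \<times> 'dm \<times> ('do \<times> 'tm)" where
  "cplus_ar T c = (\<lambda>(x1, \<beta>, x2). (cplus_ob T c x1, \<beta>, cplus_ob T c x2))"

definition cminus_ob :: "('to, 'tm, 'z2) cat_scheme \<Rightarrow> 'tm \<Rightarrow> 'tm \<times> 'do \<Rightarrow> 'tm \<times> 'do" where
  "cminus_ob T c = (\<lambda>(d, R). (cCmp T c d, R))"

definition cminus_ar :: "('to, 'tm, 'z2) cat_scheme \<Rightarrow> 'tm \<Rightarrow>
    ('tm \<times> 'do) \<times> 'dm \<times> ('tm \<times> 'do) \<Rightarrow> ('tm \<times> 'do) \<times> 'dm \<times> ('tm \<times> 'do)" where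
  "cminus_ar T c = (\<lambda>(y1, \<gamma>, y2). (cminus_ob T c y1, \<gamma>, cminus_ob T c y2))"

definition Der_ob :: "('do, 'dm, 'z1) cat_scheme \<Rightarrow> ('dm \<Rightarrow> 'tm) \<Rightarrow> 'do \<times> 'tm \<times> 'do \<Rightarrow> 'dm set" where
  "Der_ob D tA = (\<lambda>(P, c, R). der D tA P c R)"

definition Der_ar :: "('do, 'dm, 'z1) cat_scheme \<Rightarrow> 'dm \<times> 'dm \<Rightarrow> 'dm \<Rightarrow> 'dm" where
  "Der_ar D = (\<lambda>(\<beta>, \<gamma>) \<alpha>. cCmp D (cCmp D \<beta> \<alpha>) \<gamma>)"

definition bracket :: "('to, 'tm, 'z2) cat_scheme \<Rightarrow> 'do \<times> 'tm \<Rightarrow> 'tm \<times> 'do \<Rightarrow> 'do \<times> 'tm \<times> 'do" where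
  "bracket T x y = (fst x, cCmp T (snd x) (fst y), snd y)"

definition der_left :: "('do, 'dm, 'z1) cat_scheme \<Rightarrow> ('to, 'tm, 'z2) cat_scheme \<Rightarrow> ('dm \<Rightarrow> 'tm) \<Rightarrow>
    'tm \<times> 'do \<Rightarrow> ('do \<times> 'tm, ('do \<times> 'tm) \<times> 'dm \<times> ('do \<times> 'tm), 'dm) psh" where
  "der_left D T tA y = \<lparr> psh_ob = (\<lambda>x. Der_ob D tA (bracket T x y)),
                         psh_ar = (\<lambda>(x1, \<beta>, x2). Der_ar D (\<beta>, cId D (snd y))) \<rparr>"

definition der_right :: "('do, 'dm, 'z1) cat_scheme \<Rightarrow> ('to, 'tm, 'z2) cat_scheme \<Rightarrow> ('dm \<Rightarrow> 'tm) \<Rightarrow>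
    'do \<times> 'tm \<Rightarrow> ('tm \<times> 'do, ('tm \<times> 'do) \<times> 'dm \<times> ('tm \<times> 'do), 'dm) psh" where
  "der_right D T tA x = \<lparr> psh_ob = (\<lambda>y. Der_ob D tA (bracket T x y)),
                          psh_ar = (\<lambda>(y1, \<gamma>, y2). Der_ar D (cId D (fst x), \<gamma>)) \<rparr>"

text \<open>Duals. phi^{perp_B}(y) = Nat(phi, Der(<- | y>)), a presheaf on B^-;
  ^{perp_B} psi (x) = Nat(psi, Der(<x | ->)), a presheaf on B^+.\<close>

definition perp_R :: "('do, 'dm, 'z1) cat_scheme \<Rightarrow> ('to, 'tm, 'z2) cat_scheme \<Rightarrow> ('do \<Rightarrow> 'to) \<Rightarrow>
    ('dm \<Rightarrow> 'tm) \<Rightarrow> 'to \<Rightarrow> ('do \<times> 'tm, ('do \<times> 'tm) \<times> 'dm \<times> ('do \<times> 'tm), 'x) psh \<Rightarrow>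
    ('tm \<times> 'do, ('tm \<times> 'do) \<times> 'dm \<times> ('tm \<times> 'do), ('do \<times> 'tm) \<Rightarrow> 'x \<Rightarrow> 'dm) psh" where
  "perp_R D T tO tA B \<phi> =
     \<lparr> psh_ob = (\<lambda>y. nat_trans (plus_cat D T tO tA B) \<phi> (der_left D T tA y)),
       psh_ar = (\<lambda>g \<theta> x a. if x \<in> cOb (plus_cat D T tO tA B) \<and> a \<in> psh_ob \<phi> x
                            then psh_ar (der_right D T tA x) g (\<theta> x a) else undefined) \<rparr>"

definition perp_L :: "('do, 'dm, 'z1) cat_scheme \<Rightarrow> ('to, 'tm, 'z2) cat_scheme \<Rightarrow> ('do \<Rightarrow> 'to) \<Rightarrow>
    ('dm \<Rightarrow> 'tm) \<Rightarrow> 'to \<Rightarrow> ('tm \<times> 'do, ('tm \<times> 'do) \<times> 'dm \<times> ('tm \<times> 'do), 'x) psh \<Rightarrow>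
    ('do \<times> 'tm, ('do \<times> 'tm) \<times> 'dm \<times> ('do \<times> 'tm), ('tm \<times> 'do) \<Rightarrow> 'x \<Rightarrow> 'dm) psh" where
  "perp_L D T tO tA B \<psi> =
     \<lparr> psh_ob = (\<lambda>x. nat_trans (minus_cat D T tO tA B) \<psi> (der_right D T tA x)),
       psh_ar = (\<lambda>g \<theta> y a. if y \<in> cOb (minus_cat D T tO tA B) \<and> a \<in> psh_ob \<psi> y
                            then psh_ar (der_left D T tA y) g (\<theta> y a) else undefined) \<rparr>"

end

theory Submission
  imports Defs
begin

text \<open>
  For (a), precomposition with \<open>\<kappa>\<close> identifies derivations \<open>c\<^sub>!P \<Rightarrow>\<^sub>d R\<close> with derivations
  \<open>P \<Rightarrow>\<^sub>c\<^sub>;\<^sub>d R\<close> naturally in \<open>(d, R)\<close>, so \<open>(c\<^sup>-)\<^sup>*P\<^sup>-\<close> is isomorphic to the representable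
  presheaf \<open>(c\<^sub>!P)\<^sup>-\<close>. By a Yoneda argument a natural transformation \<open>(c\<^sub>!P)\<^sup>- \<Rightarrow> Der\<langle>x | -\<rangle>\<close> is
  postcomposition with its value at the identity of \<open>c\<^sub>!P\<close>, whence \<open>\<^sup>\<bottom>((c\<^sub>!P)\<^sup>-) \<cong> (c\<^sub>!P)\<^sup>+\<close>;
  and \<open>\<^sup>\<bottom>(-)\<close> turns isomorphisms into isomorphisms.

  For (b), every element of the coend \<open>(c\<^sup>+)\<^sub>!P\<^sup>+\<close> at \<open>x\<close> is the image, under an arrow of \<open>B\<^sup>+\<close>,
  of the class of \<open>id\<^sub>P\<close> at \<open>(P, c)\<close>. Hence a natural transformation from it to \<open>Der\<langle>- | y\<rangle>\<close> is
  determined by one derivation \<open>P \<Rightarrow>\<^sub>c\<^sub>;\<^sub>d R\<close>, which gives \<open>((c\<^sup>+)\<^sub>!P\<^sup>+)\<^sup>\<bottom> \<cong> (c\<^sup>-)\<^sup>*P\<^sup>-\<close>,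
  and (b) follows from (a).
\<close>

lemma equiv_generated:
  assumes "G \<subseteq> S \<times> S"
  shows "equiv S (Id_on S \<union> (G \<union> G\<inverse>)\<^sup>+)"
proof -
  have "(G \<union> G\<inverse>)\<^sup>+ \<subseteq> S \<times> S"
    using assms trancl_subset_Sigma[of "G \<union> G\<inverse>" S] by blast
  moreover have "sym ((G \<union> G\<inverse>)\<^sup>+)"
    by (rule sym_trancl) (auto simp: sym_def)
  ultimately show ?thesis
    unfolding equiv_def refl_on_def sym_def trans_def by (blast dest: trancl_trans)
qed

lemma generated_equiv_respects:
  assumes "(t, t') \<in> Id_on S \<union> (G \<union> G\<inverse>)\<^sup>+"
    and "\<And>s s'. (s, s') \<in> G \<Longrightarrow> h s = h s'"
  shows "h t = h t'"
proof -
  have "h t = h t'" if "(t, t') \<in> (G \<union> G\<inverse>)\<^sup>+"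
    using that by (induction rule: trancl_induct) (auto dest: assms(2))
  then show ?thesis using assms(1) by auto
qed

lemma generated_equiv_map:
  assumes "(t, t') \<in> Id_on S1 \<union> (G1 \<union> G1\<inverse>)\<^sup>+"
    and "\<And>s s'. (s, s') \<in> G1 \<Longrightarrow> (m s, m s') \<in> G2"
    and "\<And>s. s \<in> S1 \<Longrightarrow> m s \<in> S2"
  shows "(m t, m t') \<in> Id_on S2 \<union> (G2 \<union> G2\<inverse>)\<^sup>+"
proof -
  have "(m t, m t') \<in> (G2 \<union> G2\<inverse>)\<^sup>+" if "(t, t') \<in> (G1 \<union> G1\<inverse>)\<^sup>+"
    using that
  proof (induction rule: trancl_induct)
    case (step y z)
    then have "(m y, m z) \<in> G2 \<union> G2\<inverse>" using assms(2) by auto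
    with step.IH show ?case by (rule trancl_into_trancl)
  qed (use assms(2) in auto)
  then show ?thesis using assms by auto
qed

lemma
  assumes "is_category C"
  shows cat_dom_ob: "f \<in> cAr C \<Longrightarrow> cDom C f \<in> cOb C"
    and cat_cod_ob: "f \<in> cAr C \<Longrightarrow> cCod C f \<in> cOb C"
    and cat_id: "a \<in> cOb C \<Longrightarrow> cId C a \<in> cAr C \<and> cDom C (cId C a) = a \<and> cCod C (cId C a) = a"
    and cat_comp: "\<lbrakk>f \<in> cAr C; g \<in> cAr C; cCod C f = cDom C g\<rbrakk> \<Longrightarrow>
      cCmp C f g \<in> cAr C \<and> cDom C (cCmp C f g) = cDom C f \<and> cCod C (cCmp C f g) = cCod C g"
    and cat_id_left: "f \<in> cAr C \<Longrightarrow> cCmp C (cId C (cDom C f)) f = f"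
    and cat_id_right: "f \<in> cAr C \<Longrightarrow> cCmp C f (cId C (cCod C f)) = f"
    and cat_assoc: "\<lbrakk>f \<in> cAr C; g \<in> cAr C; h \<in> cAr C; cCod C f = cDom C g; cCod C g = cDom C h\<rbrakk> \<Longrightarrow>
      cCmp C (cCmp C f g) h = cCmp C f (cCmp C g h)"
  using assms unfolding is_category_def by blast+

lemma
  assumes "is_functor C C' Fo Fa"
  shows functor_ar: "f \<in> cAr C \<Longrightarrow>
      Fa f \<in> cAr C' \<and> cDom C' (Fa f) = Fo (cDom C f) \<and> cCod C' (Fa f) = Fo (cCod C f)"
    and functor_id: "a \<in> cOb C \<Longrightarrow> Fa (cId C a) = cId C' (Fo a)"
    and functor_comp: "\<lbrakk>f \<in> cAr C; g \<in> cAr C; cCod C f = cDom C g\<rbrakk> \<Longrightarrow>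
      Fa (cCmp C f g) = cCmp C' (Fa f) (Fa g)"
  using assms unfolding is_functor_def by blast+

lemma
  assumes "\<theta> \<in> nat_trans C F G"
  shows nat_trans_ob: "\<lbrakk>x \<in> cOb C; a \<in> psh_ob F x\<rbrakk> \<Longrightarrow> \<theta> x a \<in> psh_ob G x"
    and nat_trans_ar: "\<lbrakk>g \<in> cAr C; a \<in> psh_ob F (cCod C g)\<rbrakk> \<Longrightarrow>
      \<theta> (cDom C g) (psh_ar F g a) = psh_ar G g (\<theta> (cCod C g) a)"
    and nat_trans_undefined: "\<not> (x \<in> cOb C \<and> a \<in> psh_ob F x) \<Longrightarrow> \<theta> x a = undefined"
  using assms unfolding nat_trans_def by blast+

lemma nat_iso_trans:
  assumes "is_category C" and "nat_iso C F G" and "nat_iso C G H"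
  shows "nat_iso C F H"
proof -
  obtain \<eta> where \<eta>: "\<forall>x\<in>cOb C. bij_betw (\<eta> x) (psh_ob F x) (psh_ob G x)"
      "\<forall>g\<in>cAr C. \<forall>a\<in>psh_ob F (cCod C g). \<eta> (cDom C g) (psh_ar F g a) = psh_ar G g (\<eta> (cCod C g) a)"
    using assms(2) unfolding nat_iso_def by blast
  obtain \<mu> where \<mu>: "\<forall>x\<in>cOb C. bij_betw (\<mu> x) (psh_ob G x) (psh_ob H x)"
      "\<forall>g\<in>cAr C. \<forall>a\<in>psh_ob G (cCod C g). \<mu> (cDom C g) (psh_ar G g a) = psh_ar H g (\<mu> (cCod C g) a)"
    using assms(3) unfolding nat_iso_def by blast
  show ?thesis
    unfolding nat_iso_def
  proof (intro exI[of _ "\<lambda>x. \<mu> x \<circ> \<eta> x"] conjI ballI)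
    fix x assume "x \<in> cOb C"
    then show "bij_betw (\<mu> x \<circ> \<eta> x) (psh_ob F x) (psh_ob H x)"
      using \<eta>(1) \<mu>(1) by (blast intro: bij_betw_trans)
  next
    fix g a assume g: "g \<in> cAr C" and a: "a \<in> psh_ob F (cCod C g)"
    have "\<eta> (cCod C g) a \<in> psh_ob G (cCod C g)"
      using \<eta>(1) cat_cod_ob[OF assms(1) g] a bij_betwE by blast
    then show "(\<mu> (cDom C g) \<circ> \<eta> (cDom C g)) (psh_ar F g a) = psh_ar H g ((\<mu> (cCod C g) \<circ> \<eta> (cCod C g)) a)"
      using \<eta>(2) \<mu>(2) g a by simp
  qed
qed

text \<open>Presheaf records carry no functoriality axioms; closure of the action is the part of it
  that the transport of natural transformations along an isomorphism needs.\<close>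

definition psh_closed :: "('o, 'm, 'z) cat_scheme \<Rightarrow> ('o, 'm, 'x) psh \<Rightarrow> bool" where
  "psh_closed C F \<longleftrightarrow> (\<forall>g\<in>cAr C. \<forall>a\<in>psh_ob F (cCod C g). psh_ar F g a \<in> psh_ob F (cDom C g))"

lemma nat_trans_precomp:
  fixes \<eta> :: "'o \<Rightarrow> 'x \<Rightarrow> 'y" and F :: "('o, 'm, 'x) psh"
  assumes ar_ob: "\<forall>g\<in>cAr C. cDom C g \<in> cOb C \<and> cCod C g \<in> cOb C"
    and maps: "\<forall>x\<in>cOb C. \<forall>a\<in>psh_ob F x. \<eta> x a \<in> psh_ob F' x"
    and nat: "\<forall>g\<in>cAr C. \<forall>a\<in>psh_ob F (cCod C g).
      \<eta> (cDom C g) (psh_ar F g a) = psh_ar F' g (\<eta> (cCod C g) a)"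
    and closed: "psh_closed C F"
    and \<theta>: "\<theta> \<in> nat_trans C F' G"
  shows "(\<lambda>x a. if x \<in> cOb C \<and> a \<in> psh_ob F x then \<theta> x (\<eta> x a) else undefined) \<in> nat_trans C F G"
  unfolding nat_trans_def
proof (intro CollectI conjI ballI allI impI)
  fix g a assume g: "g \<in> cAr C" and a: "a \<in> psh_ob F (cCod C g)"
  have "psh_ar F g a \<in> psh_ob F (cDom C g)" using closed g a unfolding psh_closed_def by blast
  then show "(if cDom C g \<in> cOb C \<and> psh_ar F g a \<in> psh_ob F (cDom C g)
               then \<theta> (cDom C g) (\<eta> (cDom C g) (psh_ar F g a)) else undefined)
           = psh_ar G g (if cCod C g \<in> cOb C \<and> a \<in> psh_ob F (cCod C g)
               then \<theta> (cCod C g) (\<eta> (cCod C g) a) else undefined)"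
    using nat_trans_ar[OF \<theta> g] maps nat ar_ob g a by simp
qed (use nat_trans_ob[OF \<theta>] maps in auto)

lemma
  fixes \<eta> :: "'o \<Rightarrow> 'x \<Rightarrow> 'y" and F :: "('o, 'm, 'x) psh"
  assumes ar_ob: "\<forall>g\<in>cAr C. cDom C g \<in> cOb C \<and> cCod C g \<in> cOb C"
    and bij: "\<forall>x\<in>cOb C. bij_betw (\<eta> x) (psh_ob F x) (psh_ob F' x)"
    and nat: "\<forall>g\<in>cAr C. \<forall>a\<in>psh_ob F (cCod C g).
      \<eta> (cDom C g) (psh_ar F g a) = psh_ar F' g (\<eta> (cCod C g) a)"
    and closed: "psh_closed C F"
  shows psh_closed_nat_iso: "psh_closed C F'"
    and inv_into_natural: "\<forall>g\<in>cAr C. \<forall>b\<in>psh_ob F' (cCod C g).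
      inv_into (psh_ob F (cDom C g)) (\<eta> (cDom C g)) (psh_ar F' g b)
        = psh_ar F g (inv_into (psh_ob F (cCod C g)) (\<eta> (cCod C g)) b)"
proof -
  have inv: "inv_into (psh_ob F x) (\<eta> x) b \<in> psh_ob F x \<and> \<eta> x (inv_into (psh_ob F x) (\<eta> x) b) = b"
    if "x \<in> cOb C" "b \<in> psh_ob F' x" for x b
  proof -
    have "b \<in> \<eta> x ` psh_ob F x" using bij that bij_betw_imp_surj_on by metis
    then show ?thesis by (auto intro: inv_into_into f_inv_into_f)
  qed
  have *: "psh_ar F' g b = \<eta> (cDom C g) (psh_ar F g a) \<and> psh_ar F g a \<in> psh_ob F (cDom C g)"
    if g: "g \<in> cAr C" and b: "b \<in> psh_ob F' (cCod C g)"
      and a_def: "a = inv_into (psh_ob F (cCod C g)) (\<eta> (cCod C g)) b" for g b a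
  proof -
    have a: "a \<in> psh_ob F (cCod C g)" "\<eta> (cCod C g) a = b"
      using inv[of "cCod C g" b] ar_ob g b a_def by auto
    then have "psh_ar F' g b = \<eta> (cDom C g) (psh_ar F g a)"
      using nat g by simp
    moreover have "psh_ar F g a \<in> psh_ob F (cDom C g)"
      using closed g a unfolding psh_closed_def by blast
    ultimately show ?thesis ..
  qed
  show "psh_closed C F'"
    unfolding psh_closed_def
  proof (intro ballI)
    fix g b assume g: "g \<in> cAr C" and b: "b \<in> psh_ob F' (cCod C g)"
    then show "psh_ar F' g b \<in> psh_ob F' (cDom C g)"
      using *[OF g b refl] bij ar_ob by (metis bij_betwE)
  qed
  show "\<forall>g\<in>cAr C. \<forall>b\<in>psh_ob F' (cCod C g).
      inv_into (psh_ob F (cDom C g)) (\<eta> (cDom C g)) (psh_ar F' g b)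
        = psh_ar F g (inv_into (psh_ob F (cCod C g)) (\<eta> (cCod C g)) b)"
  proof (intro ballI)
    fix g b assume g: "g \<in> cAr C" and b: "b \<in> psh_ob F' (cCod C g)"
    have "bij_betw (\<eta> (cDom C g)) (psh_ob F (cDom C g)) (psh_ob F' (cDom C g))"
      using bij ar_ob g by blast
    then show "inv_into (psh_ob F (cDom C g)) (\<eta> (cDom C g)) (psh_ar F' g b)
        = psh_ar F g (inv_into (psh_ob F (cCod C g)) (\<eta> (cCod C g)) b)"
      using *[OF g b refl] by (simp add: bij_betw_inv_into_left)
  qed
qed

lemma bij_betw_nat_trans_transport:
  fixes \<eta> :: "'o \<Rightarrow> 'x \<Rightarrow> 'y" and F :: "('o, 'm, 'x) psh" and G :: "('o, 'm, 'v) psh"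
  assumes ar_ob: "\<forall>g\<in>cAr C. cDom C g \<in> cOb C \<and> cCod C g \<in> cOb C"
    and bij: "\<forall>x\<in>cOb C. bij_betw (\<eta> x) (psh_ob F x) (psh_ob F' x)"
    and nat: "\<forall>g\<in>cAr C. \<forall>a\<in>psh_ob F (cCod C g).
      \<eta> (cDom C g) (psh_ar F g a) = psh_ar F' g (\<eta> (cCod C g) a)"
    and closed: "psh_closed C F"
  shows "bij_betw (\<lambda>\<theta> x b. if x \<in> cOb C \<and> b \<in> psh_ob F' x
                            then \<theta> x (inv_into (psh_ob F x) (\<eta> x) b) else undefined)
           (nat_trans C F G) (nat_trans C F' G)"
proof -
  let ?fwd = "\<lambda>\<theta> x b. if x \<in> cOb C \<and> b \<in> psh_ob F' x then \<theta> x (inv_into (psh_ob F x) (\<eta> x) b) else undefined"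
  let ?bwd = "\<lambda>\<theta> x a. if x \<in> cOb C \<and> a \<in> psh_ob F x then \<theta> x (\<eta> x a) else undefined"
  have \<eta>_in: "\<eta> x a \<in> psh_ob F' x" and inv_\<eta>: "inv_into (psh_ob F x) (\<eta> x) (\<eta> x a) = a"
    if "x \<in> cOb C" "a \<in> psh_ob F x" for x a
    using bij that by (auto simp: bij_betw_inv_into_left dest: bij_betwE)
  have inv_in: "inv_into (psh_ob F x) (\<eta> x) b \<in> psh_ob F x"
    and \<eta>_inv: "\<eta> x (inv_into (psh_ob F x) (\<eta> x) b) = b"
    if "x \<in> cOb C" "b \<in> psh_ob F' x" for x b
  proof -
    have "b \<in> \<eta> x ` psh_ob F x" using bij that bij_betw_imp_surj_on by metis
    then show "inv_into (psh_ob F x) (\<eta> x) b \<in> psh_ob F x" "\<eta> x (inv_into (psh_ob F x) (\<eta> x) b) = b"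
      by (auto intro: inv_into_into f_inv_into_f)
  qed
  have "?fwd \<theta> \<in> nat_trans C F' G" if "\<theta> \<in> nat_trans C F G" for \<theta>
    by (rule nat_trans_precomp[OF ar_ob _ inv_into_natural[OF ar_ob bij nat closed]
        psh_closed_nat_iso[OF ar_ob bij nat closed] that]) (simp add: inv_in)
  moreover have "?bwd \<theta> \<in> nat_trans C F G" if "\<theta> \<in> nat_trans C F' G" for \<theta>
    by (rule nat_trans_precomp[OF ar_ob _ nat closed that]) (simp add: \<eta>_in)
  moreover have "?bwd (?fwd \<theta>) = \<theta>" if "\<theta> \<in> nat_trans C F G" for \<theta>
    using nat_trans_undefined[OF that] \<eta>_in inv_\<eta> by (auto simp: fun_eq_iff)
  moreover have "?fwd (?bwd \<theta>) = \<theta>" if "\<theta> \<in> nat_trans C F' G" for \<theta>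
    using nat_trans_undefined[OF that] inv_in \<eta>_inv by (auto simp: fun_eq_iff)
  ultimately show ?thesis
    by (intro bij_betw_byWitness[where f' = ?bwd]) auto
qed

section \<open>Left Kan extensions of presheaves\<close>

locale lan_setting =
  fixes C1 :: "('o1, 'm1, 'z1) cat_scheme" and C2 :: "('o2, 'm2, 'z2) cat_scheme"
    and Fo :: "'o1 \<Rightarrow> 'o2" and Fa :: "'m1 \<Rightarrow> 'm2" and \<chi> :: "('o1, 'm1, 'x) psh"
  assumes src_cat: "is_category C1" and tgt_cat: "is_category C2"
    and F_functor: "is_functor C1 C2 Fo Fa" and \<chi>_closed: "psh_closed C1 \<chi>"
begin

lemma lan_gen_subset: "lan_gen C1 C2 Fo Fa \<chi> y \<subseteq> lan_carrier C1 C2 Fo \<chi> y \<times> lan_carrier C1 C2 Fo \<chi> y"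
proof -
  have "((cDom C1 g, f, psh_ar \<chi> g a'), (cCod C1 g, cCmp C2 f (Fa g), a')) \<in>
          lan_carrier C1 C2 Fo \<chi> y \<times> lan_carrier C1 C2 Fo \<chi> y"
    if "g \<in> cAr C1" "f \<in> cAr C2" "cDom C2 f = y" "cCod C2 f = Fo (cDom C1 g)"
      "a' \<in> psh_ob \<chi> (cCod C1 g)" for g f a'
  proof -
    have "Fa g \<in> cAr C2" "cDom C2 (Fa g) = Fo (cDom C1 g)" "cCod C2 (Fa g) = Fo (cCod C1 g)"
      using functor_ar[OF F_functor that(1)] by auto
    then have "cCmp C2 f (Fa g) \<in> cAr C2" "cDom C2 (cCmp C2 f (Fa g)) = y"
      "cCod C2 (cCmp C2 f (Fa g)) = Fo (cCod C1 g)"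
      using cat_comp[OF tgt_cat that(2), of "Fa g"] that by auto
    moreover have "psh_ar \<chi> g a' \<in> psh_ob \<chi> (cDom C1 g)"
      using \<chi>_closed that unfolding psh_closed_def by blast
    ultimately show ?thesis
      using that cat_dom_ob[OF src_cat that(1)] cat_cod_ob[OF src_cat that(1)]
      unfolding lan_carrier_def by blast
  qed
  then show ?thesis unfolding lan_gen_def by blast
qed

lemma equiv_lan_equiv: "equiv (lan_carrier C1 C2 Fo \<chi> y) (lan_equiv C1 C2 Fo Fa \<chi> y)"
  unfolding lan_equiv_def by (rule equiv_generated[OF lan_gen_subset])

definition lan_act :: "'m2 \<Rightarrow> 'o1 \<times> 'm2 \<times> 'x \<Rightarrow> 'o1 \<times> 'm2 \<times> 'x" where
  "lan_act k = (\<lambda>(x, f, a). (x, cCmp C2 k f, a))"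

lemma lan_act_carrier:
  assumes "k \<in> cAr C2" and "t \<in> lan_carrier C1 C2 Fo \<chi> (cCod C2 k)"
  shows "lan_act k t \<in> lan_carrier C1 C2 Fo \<chi> (cDom C2 k)"
  using assms cat_comp[OF tgt_cat, of k] unfolding lan_carrier_def lan_act_def by auto

lemma lan_act_gen:
  assumes "k \<in> cAr C2" and "(t, t') \<in> lan_gen C1 C2 Fo Fa \<chi> (cCod C2 k)"
  shows "(lan_act k t, lan_act k t') \<in> lan_gen C1 C2 Fo Fa \<chi> (cDom C2 k)"
proof -
  obtain g f a' where t: "t = (cDom C1 g, f, psh_ar \<chi> g a')" "t' = (cCod C1 g, cCmp C2 f (Fa g), a')"
    and g: "g \<in> cAr C1" and f: "f \<in> cAr C2" "cDom C2 f = cCod C2 k" "cCod C2 f = Fo (cDom C1 g)"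
    and a': "a' \<in> psh_ob \<chi> (cCod C1 g)"
    using assms(2) unfolding lan_gen_def by blast
  have kf: "cCmp C2 k f \<in> cAr C2" "cDom C2 (cCmp C2 k f) = cDom C2 k"
    "cCod C2 (cCmp C2 k f) = Fo (cDom C1 g)"
    using cat_comp[OF tgt_cat assms(1) f(1)] f by auto
  have "cCmp C2 k (cCmp C2 f (Fa g)) = cCmp C2 (cCmp C2 k f) (Fa g)"
    using cat_assoc[OF tgt_cat assms(1) f(1), of "Fa g"] f functor_ar[OF F_functor g] by simp
  then have "(lan_act k t, lan_act k t') =
      ((cDom C1 g, cCmp C2 k f, psh_ar \<chi> g a'), (cCod C1 g, cCmp C2 (cCmp C2 k f) (Fa g), a'))"
    using t by (simp add: lan_act_def)
  then show ?thesis
    unfolding lan_gen_def mem_Collect_eq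
    by (intro exI[of _ g] exI[of _ "cCmp C2 k f"] exI[of _ a']) (use g kf a' in simp)
qed

lemma lan_psh_ar_class:
  assumes "k \<in> cAr C2" and "t \<in> lan_carrier C1 C2 Fo \<chi> (cCod C2 k)"
  shows "psh_ar (lan_psh C1 C2 Fo Fa \<chi>) k (lan_equiv C1 C2 Fo Fa \<chi> (cCod C2 k) `` {t})
       = lan_equiv C1 C2 Fo Fa \<chi> (cDom C2 k) `` {lan_act k t}"
proof -
  let ?E1 = "lan_equiv C1 C2 Fo Fa \<chi> (cDom C2 k)" and ?E2 = "lan_equiv C1 C2 Fo Fa \<chi> (cCod C2 k)"
  have act: "(lan_act k s, lan_act k s') \<in> ?E1" if "(s, s') \<in> ?E2" for s s'
    using that unfolding lan_equiv_def
    by (rule generated_equiv_map) (erule lan_act_gen[OF assms(1)], erule lan_act_carrier[OF assms(1)])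
  have refl: "(t, t) \<in> ?E2"
    using equiv_lan_equiv assms(2) unfolding equiv_def refl_on_def by blast
  have trans: "trans ?E1" using equiv_lan_equiv unfolding equiv_def by blast
  have "?E1 `` (lan_act k ` (?E2 `` {t})) = ?E1 `` {lan_act k t}"
  proof (intro equalityI subsetI)
    fix z assume "z \<in> ?E1 `` (lan_act k ` (?E2 `` {t}))"
    then obtain s where s: "(t, s) \<in> ?E2" "(lan_act k s, z) \<in> ?E1" by blast
    show "z \<in> ?E1 `` {lan_act k t}" using transD[OF trans act[OF s(1)] s(2)] by simp
  qed (use refl in blast)
  moreover have "psh_ar (lan_psh C1 C2 Fo Fa \<chi>) k u = ?E1 `` (lan_act k ` u)" for u
    by (simp add: lan_psh_def lan_act_def)
  ultimately show ?thesis by simp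
qed

end

locale refinement =
  fixes D :: "('do, 'dm) cat" and T :: "('to, 'tm) cat"
    and tO :: "'do \<Rightarrow> 'to" and tA :: "'dm \<Rightarrow> 'tm"
  assumes refinement: "refinement_system D T tO tA"
begin

lemma D_cat: "is_category D" and T_cat: "is_category T" and t_functor: "is_functor D T tO tA"
  using refinement unfolding refinement_system_def by auto

lemma mem_der: "\<alpha> \<in> der D tA X e Y \<longleftrightarrow> \<alpha> \<in> cAr D \<and> cDom D \<alpha> = X \<and> cCod D \<alpha> = Y \<and> tA \<alpha> = e"
  by (simp add: der_def)

lemma der_base:
  assumes "\<alpha> \<in> der D tA X e Y"
  shows "e \<in> cAr T \<and> cDom T e = tO X \<and> cCod T e = tO Y \<and> X \<in> cOb D \<and> Y \<in> cOb D"
  using assms functor_ar[OF t_functor] cat_dom_ob[OF D_cat] cat_cod_ob[OF D_cat]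
  unfolding mem_der by blast

lemma der_comp:
  "\<alpha> \<in> der D tA X e Y \<Longrightarrow> \<beta> \<in> der D tA Y e' Z \<Longrightarrow> cCmp D \<alpha> \<beta> \<in> der D tA X (cCmp T e e') Z"
  unfolding mem_der using cat_comp[OF D_cat] functor_comp[OF t_functor] by metis

lemma der_id: "X \<in> cOb D \<Longrightarrow> cId D X \<in> der D tA X (cId T (tO X)) X"
  unfolding mem_der using cat_id[OF D_cat] functor_id[OF t_functor] by metis

lemma der_assoc:
  "\<alpha> \<in> der D tA X e Y \<Longrightarrow> \<beta> \<in> der D tA Y e' Z \<Longrightarrow> \<gamma> \<in> der D tA Z e'' W \<Longrightarrow>
   cCmp D (cCmp D \<alpha> \<beta>) \<gamma> = cCmp D \<alpha> (cCmp D \<beta> \<gamma>)"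
  unfolding mem_der using cat_assoc[OF D_cat] by metis

lemma der_id_left: "\<alpha> \<in> der D tA X e Y \<Longrightarrow> cCmp D (cId D X) \<alpha> = \<alpha>"
  unfolding mem_der using cat_id_left[OF D_cat] by metis

lemma der_id_right: "\<alpha> \<in> der D tA X e Y \<Longrightarrow> cCmp D \<alpha> (cId D Y) = \<alpha>"
  unfolding mem_der using cat_id_right[OF D_cat] by metis

lemma T_assoc:
  "\<lbrakk>f \<in> cAr T; g \<in> cAr T; h \<in> cAr T; cCod T f = cDom T g; cCod T g = cDom T h\<rbrakk> \<Longrightarrow>
   cCmp T (cCmp T f g) h = cCmp T f (cCmp T g h)"
  by (rule cat_assoc[OF T_cat])

lemma T_id_left: "f \<in> cAr T \<Longrightarrow> cDom T f = a \<Longrightarrow> cCmp T (cId T a) f = f"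
  using cat_id_left[OF T_cat] by blast

lemma T_id_right: "f \<in> cAr T \<Longrightarrow> cCod T f = a \<Longrightarrow> cCmp T f (cId T a) = f"
  using cat_id_right[OF T_cat] by blast

abbreviation Plus :: "'to \<Rightarrow> ('do \<times> 'tm, ('do \<times> 'tm) \<times> 'dm \<times> ('do \<times> 'tm)) cat" where
  "Plus X \<equiv> plus_cat D T tO tA X"

abbreviation Minus :: "'to \<Rightarrow> ('tm \<times> 'do, ('tm \<times> 'do) \<times> 'dm \<times> ('tm \<times> 'do)) cat" where
  "Minus X \<equiv> minus_cat D T tO tA X"

lemma plus_cat_ob [simp]:
  "x \<in> cOb (Plus X) \<longleftrightarrow> fst x \<in> cOb D \<and> snd x \<in> cAr T \<and> cDom T (snd x) = tO (fst x) \<and> cCod T (snd x) = X"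
  by (cases x) (simp add: plus_cat_def Let_def)

lemma plus_cat_ar [simp]:
  "(x1, \<beta>, x2) \<in> cAr (Plus X) \<longleftrightarrow> x1 \<in> cOb (Plus X) \<and> x2 \<in> cOb (Plus X)
     \<and> \<beta> \<in> der D tA (fst x1) (tA \<beta>) (fst x2) \<and> cCmp T (tA \<beta>) (snd x2) = snd x1"
  by (auto simp add: plus_cat_def Let_def)

lemma plus_cat_simps [simp]:
  "cDom (Plus X) (x1, \<beta>, x2) = x1"
  "cCod (Plus X) (x1, \<beta>, x2) = x2"
  "cId (Plus X) x = (x, cId D (fst x), x)"
  "cCmp (Plus X) (x1, \<beta>, x2) (y1, \<beta>', y2) = (x1, cCmp D \<beta> \<beta>', y2)"
  by (simp_all add: plus_cat_def Let_def)

lemma minus_cat_ob [simp]: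
  "y \<in> cOb (Minus X) \<longleftrightarrow> fst y \<in> cAr T \<and> cDom T (fst y) = X \<and> snd y \<in> cOb D \<and> cCod T (fst y) = tO (snd y)"
  by (cases y) (simp add: minus_cat_def Let_def)

lemma minus_cat_ar [simp]:
  "(y1, \<gamma>, y2) \<in> cAr (Minus X) \<longleftrightarrow> y1 \<in> cOb (Minus X) \<and> y2 \<in> cOb (Minus X)
     \<and> \<gamma> \<in> der D tA (snd y1) (tA \<gamma>) (snd y2) \<and> cCmp T (fst y1) (tA \<gamma>) = fst y2"
  by (simp add: minus_cat_def Let_def)

lemma minus_cat_simps [simp]:
  "cDom (Minus X) (y1, \<gamma>, y2) = y2"
  "cCod (Minus X) (y1, \<gamma>, y2) = y1"
  by (simp_all add: minus_cat_def Let_def)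

lemma psh_simps [simp]:
  "psh_ob (plus_psh D tA Q) x = der D tA (fst x) (snd x) Q"
  "psh_ar (plus_psh D tA Q) (x1, \<beta>, x2) \<alpha> = cCmp D \<beta> \<alpha>"
  "psh_ob (minus_psh D tA Q) y = der D tA Q (fst y) (snd y)"
  "psh_ar (minus_psh D tA Q) (y1, \<gamma>, y2) \<alpha> = cCmp D \<alpha> \<gamma>"
  "psh_ob (der_left D T tA y) x = der D tA (fst x) (cCmp T (snd x) (fst y)) (snd y)"
  "psh_ar (der_left D T tA y) (x1, \<beta>, x2) \<alpha> = cCmp D (cCmp D \<beta> \<alpha>) (cId D (snd y))"
  "psh_ob (der_right D T tA x) y = der D tA (fst x) (cCmp T (snd x) (fst y)) (snd y)"
  "psh_ar (der_right D T tA x) (y1, \<gamma>, y2) \<alpha> = cCmp D (cCmp D (cId D (fst x)) \<alpha>) \<gamma>"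
  by (simp_all add: plus_psh_def minus_psh_def der_left_def der_right_def Der_ob_def Der_ar_def
      bracket_def split: prod.split)

lemma perp_simps [simp]:
  "psh_ob (perp_L D T tO tA X \<psi>) x = nat_trans (Minus X) \<psi> (der_right D T tA x)"
  "psh_ar (perp_L D T tO tA X \<psi>) g \<Phi> = (\<lambda>y a. if y \<in> cOb (Minus X) \<and> a \<in> psh_ob \<psi> y
      then psh_ar (der_left D T tA y) g (\<Phi> y a) else undefined)"
  "psh_ob (perp_R D T tO tA X \<phi>) y = nat_trans (Plus X) \<phi> (der_left D T tA y)"
  "psh_ar (perp_R D T tO tA X \<phi>) h \<theta> = (\<lambda>x a. if x \<in> cOb (Plus X) \<and> a \<in> psh_ob \<phi> x
      then psh_ar (der_right D T tA x) h (\<theta> x a) else undefined)"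
  by (simp_all add: perp_L_def perp_R_def)

lemma plus_cat_comp_ar:
  assumes "(x1, \<beta>, x2) \<in> cAr (Plus X)" and "(x2, \<beta>', x3) \<in> cAr (Plus X)"
  shows "(x1, cCmp D \<beta> \<beta>', x3) \<in> cAr (Plus X)"
proof -
  have \<beta>: "\<beta> \<in> der D tA (fst x1) (tA \<beta>) (fst x2)" "\<beta>' \<in> der D tA (fst x2) (tA \<beta>') (fst x3)"
    using assms by simp_all
  have comp: "cCmp D \<beta> \<beta>' \<in> der D tA (fst x1) (cCmp T (tA \<beta>) (tA \<beta>')) (fst x3)"
    using der_comp[OF \<beta>] .
  have "cCmp T (cCmp T (tA \<beta>) (tA \<beta>')) (snd x3) = cCmp T (tA \<beta>) (cCmp T (tA \<beta>') (snd x3))"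
    using T_assoc der_base[OF \<beta>(1)] der_base[OF \<beta>(2)] assms by simp
  then show ?thesis
    using assms comp by (simp add: mem_der)
qed

lemma is_category_plus_cat: "is_category (Plus X)"
  unfolding is_category_def
proof (intro conjI ballI impI)
  fix x assume x: "x \<in> cOb (Plus X)"
  show "cId (Plus X) x \<in> cAr (Plus X)"
    using x der_id[of "fst x"] T_id_left[of "snd x"] functor_id[OF t_functor] by (simp add: mem_der)
next
  fix f g assume fg: "f \<in> cAr (Plus X)" "g \<in> cAr (Plus X)" "cCod (Plus X) f = cDom (Plus X) g"
  obtain x1 \<beta> x2 y1 \<beta>' y2 where "f = (x1, \<beta>, x2)" "g = (y1, \<beta>', y2)"
    by (metis prod_cases3)
  then show "cCmp (Plus X) f g \<in> cAr (Plus X)"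
    using fg by (simp del: plus_cat_ar add: plus_cat_comp_ar)
qed (auto simp: split_paired_all der_id_left der_id_right der_assoc)

lemma cplus_simps [simp]:
  "cplus_ob T c (Q, e) = (Q, cCmp T e c)"
  "cplus_ar T c (x1, \<beta>, x2) = (cplus_ob T c x1, \<beta>, cplus_ob T c x2)"
  by (simp_all add: cplus_ob_def cplus_ar_def)

lemma is_functor_cplus:
  assumes c: "c \<in> cAr T"
  shows "is_functor (Plus (cDom T c)) (Plus (cCod T c)) (cplus_ob T c) (cplus_ar T c)"
proof -
  have ob: "cplus_ob T c x \<in> cOb (Plus (cCod T c))" if "x \<in> cOb (Plus (cDom T c))" for x
    using that cat_comp[OF T_cat _ c] by (cases x) auto
  have "cplus_ar T c f \<in> cAr (Plus (cCod T c))" if f: "f \<in> cAr (Plus (cDom T c))" for f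
  proof -
    obtain P1 e1 \<beta> P2 e2 where f_def: "f = ((P1, e1), \<beta>, (P2, e2))" by (metis prod.collapse)
    then have \<beta>: "\<beta> \<in> der D tA P1 (tA \<beta>) P2" and e1: "e1 = cCmp T (tA \<beta>) e2"
      and e2: "e2 \<in> cAr T" "cDom T e2 = tO P2" "cCod T e2 = cDom T c"
      using f by auto
    have "cCmp T e1 c = cCmp T (tA \<beta>) (cCmp T e2 c)"
      using e1 e2 T_assoc der_base[OF \<beta>] c by simp
    moreover have "(P1, cCmp T e1 c) \<in> cOb (Plus (cCod T c))" "(P2, cCmp T e2 c) \<in> cOb (Plus (cCod T c))"
      using ob[of "(P1, e1)"] ob[of "(P2, e2)"] f f_def by auto
    ultimately show ?thesis
      using f_def \<beta> by (simp only: cplus_simps plus_cat_ar) simp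
  qed
  then show ?thesis
    unfolding is_functor_def using ob by (auto simp: split_paired_all)
qed

lemma psh_closed_plus_psh: "psh_closed (Plus X) (plus_psh D tA Q)"
  unfolding psh_closed_def
proof (intro ballI)
  fix g \<alpha> assume g: "g \<in> cAr (Plus X)" and \<alpha>: "\<alpha> \<in> psh_ob (plus_psh D tA Q) (cCod (Plus X) g)"
  obtain x1 \<beta> x2 where g_def: "g = (x1, \<beta>, x2)" by (metis prod_cases3)
  then show "psh_ar (plus_psh D tA Q) g \<alpha> \<in> psh_ob (plus_psh D tA Q) (cDom (Plus X) g)"
    using g \<alpha> der_comp[of \<beta> "fst x1" "tA \<beta>" "fst x2" \<alpha> "snd x2" Q] by auto
qed

lemma psh_closed_minus_psh: "psh_closed (Minus X) (minus_psh D tA Q)"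
  unfolding psh_closed_def
proof (intro ballI)
  fix g \<alpha> assume g: "g \<in> cAr (Minus X)" and \<alpha>: "\<alpha> \<in> psh_ob (minus_psh D tA Q) (cCod (Minus X) g)"
  obtain y1 \<gamma> y2 where g_def: "g = (y1, \<gamma>, y2)" by (metis prod_cases3)
  then show "psh_ar (minus_psh D tA Q) g \<alpha> \<in> psh_ob (minus_psh D tA Q) (cDom (Minus X) g)"
    using g \<alpha> der_comp[of \<alpha> Q "fst y1" "snd y1" \<gamma> "tA \<gamma>" "snd y2"] by auto
qed

lemma minus_cat_ar_obs: "\<forall>g\<in>cAr (Minus X). cDom (Minus X) g \<in> cOb (Minus X) \<and> cCod (Minus X) g \<in> cOb (Minus X)"
  by (simp only: Ball_def split_paired_All minus_cat_ar minus_cat_simps) blast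

lemma nat_iso_perp_L:
  fixes \<psi>1 :: "('tm \<times> 'do, ('tm \<times> 'do) \<times> 'dm \<times> ('tm \<times> 'do), 'x) psh"
    and \<psi>2 :: "('tm \<times> 'do, ('tm \<times> 'do) \<times> 'dm \<times> ('tm \<times> 'do), 'y) psh"
  assumes iso: "nat_iso (Minus X) \<psi>1 \<psi>2" and closed: "psh_closed (Minus X) \<psi>1"
  shows "nat_iso (Plus X) (perp_L D T tO tA X \<psi>1) (perp_L D T tO tA X \<psi>2)"
proof -
  obtain \<eta> where bij: "\<forall>y\<in>cOb (Minus X). bij_betw (\<eta> y) (psh_ob \<psi>1 y) (psh_ob \<psi>2 y)"
    and nat: "\<forall>g\<in>cAr (Minus X). \<forall>a\<in>psh_ob \<psi>1 (cCod (Minus X) g).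
      \<eta> (cDom (Minus X) g) (psh_ar \<psi>1 g a) = psh_ar \<psi>2 g (\<eta> (cCod (Minus X) g) a)"
    using iso unfolding nat_iso_def by blast
  define transport where "transport \<Phi> = (\<lambda>y b. if y \<in> cOb (Minus X) \<and> b \<in> psh_ob \<psi>2 y
      then \<Phi> y (inv_into (psh_ob \<psi>1 y) (\<eta> y) b) else undefined)" for \<Phi> :: "'tm \<times> 'do \<Rightarrow> 'x \<Rightarrow> 'dm"
  have inv_in: "inv_into (psh_ob \<psi>1 y) (\<eta> y) b \<in> psh_ob \<psi>1 y"
    if "y \<in> cOb (Minus X)" "b \<in> psh_ob \<psi>2 y" for y b
  proof -
    have "b \<in> \<eta> y ` psh_ob \<psi>1 y" using bij that bij_betw_imp_surj_on by metis
    then show ?thesis by (rule inv_into_into)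
  qed
  show ?thesis
    unfolding nat_iso_def
  proof (intro exI[of _ "\<lambda>x. transport"] conjI ballI)
    fix x
    show "bij_betw transport (psh_ob (perp_L D T tO tA X \<psi>1) x) (psh_ob (perp_L D T tO tA X \<psi>2) x)"
      unfolding transport_def perp_simps
      by (rule bij_betw_nat_trans_transport[OF minus_cat_ar_obs bij nat closed])
  next
    fix g \<Phi>
    show "transport (psh_ar (perp_L D T tO tA X \<psi>1) g \<Phi>) =
          psh_ar (perp_L D T tO tA X \<psi>2) g (transport \<Phi>)"
      using inv_in by (auto simp: transport_def fun_eq_iff)
  qed
qed

definition postcomp :: "'to \<Rightarrow> 'do \<Rightarrow> 'dm \<Rightarrow> 'tm \<times> 'do \<Rightarrow> 'dm \<Rightarrow> 'dm" where
  "postcomp X Q \<alpha> = (\<lambda>y \<beta>. if y \<in> cOb (Minus X) \<and> \<beta> \<in> der D tA Q (fst y) (snd y)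
                            then cCmp D \<alpha> \<beta> else undefined)"

lemma postcomp_in_nat_trans:
  assumes \<alpha>: "\<alpha> \<in> der D tA (fst x) (snd x) Q"
  shows "postcomp X Q \<alpha> \<in> nat_trans (Minus X) (minus_psh D tA Q) (der_right D T tA x)"
  unfolding nat_trans_def
proof (intro CollectI conjI ballI allI impI)
  fix y \<beta> assume "y \<in> cOb (Minus X)" "\<beta> \<in> psh_ob (minus_psh D tA Q) y"
  then show "postcomp X Q \<alpha> y \<beta> \<in> psh_ob (der_right D T tA x) y"
    using der_comp[OF \<alpha>] by (simp add: postcomp_def)
next
  fix g \<beta> assume g: "g \<in> cAr (Minus X)" and \<beta>: "\<beta> \<in> psh_ob (minus_psh D tA Q) (cCod (Minus X) g)"
  obtain y1 \<gamma> y2 where g_def: "g = (y1, \<gamma>, y2)" by (metis prod_cases3)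
  have \<gamma>: "\<gamma> \<in> der D tA (snd y1) (tA \<gamma>) (snd y2)" and y: "y1 \<in> cOb (Minus X)" "y2 \<in> cOb (Minus X)"
    and e: "cCmp T (fst y1) (tA \<gamma>) = fst y2"
    using g g_def by auto
  have \<beta>': "\<beta> \<in> der D tA Q (fst y1) (snd y1)" using \<beta> g_def by simp
  have "cCmp D \<beta> \<gamma> \<in> der D tA Q (fst y2) (snd y2)" using der_comp[OF \<beta>' \<gamma>] e by simp
  then show "postcomp X Q \<alpha> (cDom (Minus X) g) (psh_ar (minus_psh D tA Q) g \<beta>) =
      psh_ar (der_right D T tA x) g (postcomp X Q \<alpha> (cCod (Minus X) g) \<beta>)"
    using g_def y \<beta>' der_assoc[OF \<alpha> \<beta>' \<gamma>] der_id_left[OF der_comp[OF \<alpha> \<beta>']]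
    by (simp add: postcomp_def)
qed (auto simp: postcomp_def)

lemma
  assumes Q: "Q \<in> cOb D" "tO Q = X"
  shows unit_in_minus_cat: "(cId T X, Q) \<in> cOb (Minus X)"
    and id_in_minus_psh: "cId D Q \<in> psh_ob (minus_psh D tA Q) (cId T X, Q)"
  using der_id[OF Q(1)] der_base[OF der_id[OF Q(1)]] Q(2) by auto

lemma nat_trans_minus_psh_eq_postcomp:
  assumes Q: "Q \<in> cOb D" "tO Q = X" and x: "x \<in> cOb (Plus X)"
    and \<Phi>: "\<Phi> \<in> nat_trans (Minus X) (minus_psh D tA Q) (der_right D T tA x)"
  shows "\<Phi> (cId T X, Q) (cId D Q) \<in> der D tA (fst x) (snd x) Q"
    and "postcomp X Q (\<Phi> (cId T X, Q) (cId D Q)) = \<Phi>"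
proof -
  let ?y0 = "(cId T X, Q)"
  show \<Phi>_y0: "\<Phi> ?y0 (cId D Q) \<in> der D tA (fst x) (snd x) Q"
    using nat_trans_ob[OF \<Phi> unit_in_minus_cat[OF Q] id_in_minus_psh[OF Q]] T_id_right[of "snd x" X] x
    by simp
  have "\<Phi> y \<beta> = cCmp D (\<Phi> ?y0 (cId D Q)) \<beta>"
    if y: "y \<in> cOb (Minus X)" and \<beta>: "\<beta> \<in> der D tA Q (fst y) (snd y)" for y \<beta>
  proof -
    have g: "(?y0, \<beta>, y) \<in> cAr (Minus X)"
      using unit_in_minus_cat[OF Q] y \<beta> T_id_left[of "fst y" X] by (simp add: mem_der)
    have "\<Phi> y (cCmp D (cId D Q) \<beta>) = cCmp D (cCmp D (cId D (fst x)) (\<Phi> ?y0 (cId D Q))) \<beta>"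
      using nat_trans_ar[OF \<Phi> g] id_in_minus_psh[OF Q] by simp
    then show ?thesis
      using der_id_left[OF \<Phi>_y0] der_id_left[OF \<beta>] by metis
  qed
  then show "postcomp X Q (\<Phi> ?y0 (cId D Q)) = \<Phi>"
    using nat_trans_undefined[OF \<Phi>] by (auto simp: postcomp_def fun_eq_iff)
qed

lemma nat_iso_plus_psh_perp_L_minus_psh:
  assumes Q: "Q \<in> cOb D" "tO Q = X"
  shows "nat_iso (Plus X) (plus_psh D tA Q) (perp_L D T tO tA X (minus_psh D tA Q))"
  unfolding nat_iso_def
proof (intro exI[of _ "\<lambda>x. postcomp X Q"] conjI ballI)
  fix x assume x: "x \<in> cOb (Plus X)"
  have "postcomp X Q \<alpha> (cId T X, Q) (cId D Q) = \<alpha>" if "\<alpha> \<in> der D tA (fst x) (snd x) Q" for \<alpha>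
    using unit_in_minus_cat[OF Q] id_in_minus_psh[OF Q] der_id_right[OF that] by (simp add: postcomp_def)
  then show "bij_betw (postcomp X Q) (psh_ob (plus_psh D tA Q) x)
      (psh_ob (perp_L D T tO tA X (minus_psh D tA Q)) x)"
    using postcomp_in_nat_trans[where x = x] nat_trans_minus_psh_eq_postcomp[OF Q x]
    by (intro bij_betw_byWitness[where f' = "\<lambda>\<Phi>. \<Phi> (cId T X, Q) (cId D Q)"]) auto
next
  fix g \<alpha> assume g: "g \<in> cAr (Plus X)" and \<alpha>: "\<alpha> \<in> psh_ob (plus_psh D tA Q) (cCod (Plus X) g)"
  obtain x1 \<beta> x2 where g_def: "g = (x1, \<beta>, x2)" by (metis prod_cases3)
  have \<beta>: "\<beta> \<in> der D tA (fst x1) (tA \<beta>) (fst x2)" and \<alpha>': "\<alpha> \<in> der D tA (fst x2) (snd x2) Q"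
    using g \<alpha> g_def by auto
  show "postcomp X Q (psh_ar (plus_psh D tA Q) g \<alpha>) =
      psh_ar (perp_L D T tO tA X (minus_psh D tA Q)) g (postcomp X Q \<alpha>)"
    using g_def der_assoc[OF \<beta> \<alpha>'] der_id_right[OF der_comp[OF \<beta> der_comp[OF \<alpha>']]]
    by (auto simp: postcomp_def fun_eq_iff)
qed

end

section \<open>Pushforwards\<close>

locale pushforward = refinement D T tO tA
  for D :: "('do, 'dm) cat" and T :: "('to, 'tm) cat" and tO :: "'do \<Rightarrow> 'to" and tA :: "'dm \<Rightarrow> 'tm" +
  fixes c :: 'tm and P Pc :: 'do and \<kappa> :: 'dm
  assumes c: "c \<in> cAr T" and P: "P \<in> cOb D" "tO P = cDom T c"
    and pushforward: "is_pushforward D T tO tA P c Pc \<kappa>"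
begin

abbreviation A :: 'to where "A \<equiv> cDom T c"
abbreviation B :: 'to where "B \<equiv> cCod T c"

abbreviation P_minus_c :: "('tm \<times> 'do, ('tm \<times> 'do) \<times> 'dm \<times> ('tm \<times> 'do), 'dm) psh" where
  "P_minus_c \<equiv> pb_psh (cminus_ob T c) (cminus_ar T c) (minus_psh D tA P)"

lemma P_minus_c_simps [simp]:
  "psh_ob P_minus_c y = der D tA P (cCmp T c (fst y)) (snd y)"
  "psh_ar P_minus_c (y1, \<gamma>, y2) \<alpha> = cCmp D \<alpha> \<gamma>"
  by (simp_all add: pb_psh_def cminus_ob_def cminus_ar_def split: prod.split)

lemma pushforward_ob: "Pc \<in> cOb D" "tO Pc = B" and pushforward_der: "\<kappa> \<in> der D tA P c Pc"
  using pushforward unfolding is_pushforward_def by auto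

lemma bij_betw_pushforward:
  assumes "y \<in> cOb (Minus B)"
  shows "bij_betw (cCmp D \<kappa>) (der D tA Pc (fst y) (snd y)) (der D tA P (cCmp T c (fst y)) (snd y))"
  using pushforward assms unfolding is_pushforward_def by simp

lemma psh_closed_P_minus_c: "psh_closed (Minus B) P_minus_c"
  unfolding psh_closed_def
proof (intro ballI)
  fix g \<alpha> assume g: "g \<in> cAr (Minus B)" and \<alpha>: "\<alpha> \<in> psh_ob P_minus_c (cCod (Minus B) g)"
  obtain y1 \<gamma> y2 where g_def: "g = (y1, \<gamma>, y2)" by (metis prod_cases3)
  have \<gamma>: "\<gamma> \<in> der D tA (snd y1) (tA \<gamma>) (snd y2)" and y1: "y1 \<in> cOb (Minus B)"
    and e: "cCmp T (fst y1) (tA \<gamma>) = fst y2"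
    using g g_def by auto
  have "cCmp T (cCmp T c (fst y1)) (tA \<gamma>) = cCmp T c (fst y2)"
    using T_assoc c y1 der_base[OF \<gamma>] e by simp
  moreover have "\<alpha> \<in> der D tA P (cCmp T c (fst y1)) (snd y1)" using \<alpha> g_def by simp
  ultimately show "psh_ar P_minus_c g \<alpha> \<in> psh_ob P_minus_c (cDom (Minus B) g)"
    using der_comp[OF _ \<gamma>] g_def by fastforce
qed

lemma nat_iso_minus_psh_pushforward: "nat_iso (Minus B) (minus_psh D tA Pc) P_minus_c"
  unfolding nat_iso_def
proof (intro exI[of _ "\<lambda>y. cCmp D \<kappa>"] conjI ballI)
  fix g \<beta> assume g: "g \<in> cAr (Minus B)" and \<beta>: "\<beta> \<in> psh_ob (minus_psh D tA Pc) (cCod (Minus B) g)"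
  obtain y1 \<gamma> y2 where g_def: "g = (y1, \<gamma>, y2)" by (metis prod_cases3)
  have \<gamma>: "\<gamma> \<in> der D tA (snd y1) (tA \<gamma>) (snd y2)" using g g_def by simp
  have "\<beta> \<in> der D tA Pc (fst y1) (snd y1)" using \<beta> g_def by simp
  then show "cCmp D \<kappa> (psh_ar (minus_psh D tA Pc) g \<beta>) = psh_ar P_minus_c g (cCmp D \<kappa> \<beta>)"
    using der_assoc[OF pushforward_der _ \<gamma>] g_def by simp
qed (simp add: bij_betw_pushforward)

theorem nat_iso_plus_psh_pushforward_perp_L:
  "nat_iso (Plus B) (plus_psh D tA Pc) (perp_L D T tO tA B P_minus_c)"
  using nat_iso_trans[OF is_category_plus_cat nat_iso_plus_psh_perp_L_minus_psh[OF pushforward_ob]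
      nat_iso_perp_L[OF nat_iso_minus_psh_pushforward psh_closed_minus_psh]] .

sublocale lan: lan_setting "Plus A" "Plus B" "cplus_ob T c" "cplus_ar T c" "plus_psh D tA P"
  by unfold_locales (simp_all add: is_category_plus_cat is_functor_cplus[OF c] psh_closed_plus_psh)

abbreviation Lan :: "('do \<times> 'tm, ('do \<times> 'tm) \<times> 'dm \<times> ('do \<times> 'tm),
    (('do \<times> 'tm) \<times> (('do \<times> 'tm) \<times> 'dm \<times> ('do \<times> 'tm)) \<times> 'dm) set) psh" where
  "Lan \<equiv> lan_psh (Plus A) (Plus B) (cplus_ob T c) (cplus_ar T c) (plus_psh D tA P)"

abbreviation Lan_carrier where
  "Lan_carrier \<equiv> lan_carrier (Plus A) (Plus B) (cplus_ob T c) (plus_psh D tA P)"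

abbreviation Lan_equiv where
  "Lan_equiv \<equiv> lan_equiv (Plus A) (Plus B) (cplus_ob T c) (cplus_ar T c) (plus_psh D tA P)"

lemma psh_ob_Lan [simp]: "psh_ob Lan x = Lan_carrier x // Lan_equiv x"
  by (simp add: lan_psh_def)

lemma Lan_carrierE:
  assumes "t \<in> Lan_carrier x"
  obtains x0 \<beta> a0 where "t = (x0, (x, \<beta>, cplus_ob T c x0), a0)" "x0 \<in> cOb (Plus A)"
    "(x, \<beta>, cplus_ob T c x0) \<in> cAr (Plus B)" "a0 \<in> der D tA (fst x0) (snd x0) P"
proof -
  obtain x0 f a0 where t: "t = (x0, f, a0)" by (metis prod_cases3)
  obtain x' \<beta> x'' where f: "f = (x', \<beta>, x'')" by (metis prod_cases3)
  have mem: "x0 \<in> cOb (Plus A)" "f \<in> cAr (Plus B)" "cDom (Plus B) f = x"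
    "cCod (Plus B) f = cplus_ob T c x0" "a0 \<in> der D tA (fst x0) (snd x0) P"
    using assms t unfolding lan_carrier_def by auto
  then have "f = (x, \<beta>, cplus_ob T c x0)" using f by simp
  then show ?thesis
    using mem t by (intro that) auto
qed

lemma Lan_leg_der:
  assumes "(x, \<beta>, cplus_ob T c x0) \<in> cAr (Plus B)" and "x0 \<in> cOb (Plus A)"
    and "a0 \<in> der D tA (fst x0) (snd x0) P"
  shows "cCmp D \<beta> a0 \<in> der D tA (fst x) (cCmp T (tA \<beta>) (snd x0)) P"
    and "cCmp T (cCmp T (tA \<beta>) (snd x0)) c = snd x"
proof -
  obtain Q e where x0: "x0 = (Q, e)" by (cases x0)
  have \<beta>: "\<beta> \<in> der D tA (fst x) (tA \<beta>) Q" and e: "cCmp T (tA \<beta>) (cCmp T e c) = snd x"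
    using assms(1) x0 by simp_all
  show "cCmp D \<beta> a0 \<in> der D tA (fst x) (cCmp T (tA \<beta>) (snd x0)) P"
    using der_comp[OF \<beta>] assms(3) x0 by simp
  show "cCmp T (cCmp T (tA \<beta>) (snd x0)) c = snd x"
    using e T_assoc der_base[OF \<beta>] assms(2) x0 c by simp
qed

definition lan_eval :: "'dm \<Rightarrow> ('do \<times> 'tm) \<times> (('do \<times> 'tm) \<times> 'dm \<times> ('do \<times> 'tm)) \<times> 'dm \<Rightarrow> 'dm" where
  "lan_eval a = (\<lambda>(x0, f, a0). cCmp D (cCmp D (fst (snd f)) a0) a)"

text \<open>By \<open>lan_eval_gen\<close> the value does not depend on the representative picked by \<open>SOME\<close>.\<close>

definition lan_extend :: "'dm \<Rightarrow> 'do \<times> 'tm \<Rightarrow>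
    (('do \<times> 'tm) \<times> (('do \<times> 'tm) \<times> 'dm \<times> ('do \<times> 'tm)) \<times> 'dm) set \<Rightarrow> 'dm" where
  "lan_extend a x u = (if x \<in> cOb (Plus B) \<and> u \<in> psh_ob Lan x then lan_eval a (SOME t. t \<in> u) else undefined)"

lemma lan_eval_der:
  assumes y: "y \<in> cOb (Minus B)" and a: "a \<in> der D tA P (cCmp T c (fst y)) (snd y)"
    and t: "t \<in> Lan_carrier x"
  shows "lan_eval a t \<in> der D tA (fst x) (cCmp T (snd x) (fst y)) (snd y)"
proof -
  obtain x0 \<beta> a0 where t_def: "t = (x0, (x, \<beta>, cplus_ob T c x0), a0)" and x0: "x0 \<in> cOb (Plus A)"
    and \<beta>: "(x, \<beta>, cplus_ob T c x0) \<in> cAr (Plus B)" and a0: "a0 \<in> der D tA (fst x0) (snd x0) P"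
    using Lan_carrierE[OF t] by metis
  let ?e = "cCmp T (tA \<beta>) (snd x0)"
  have leg: "cCmp D \<beta> a0 \<in> der D tA (fst x) ?e P" and e: "cCmp T ?e c = snd x"
    using Lan_leg_der[OF \<beta> x0 a0] by auto
  have "cCmp T ?e (cCmp T c (fst y)) = cCmp T (cCmp T ?e c) (fst y)"
    using T_assoc der_base[OF leg] P c y by simp
  then show ?thesis
    using der_comp[OF leg a] e t_def by (simp add: lan_eval_def)
qed

lemma lan_eval_gen:
  assumes "(t, t') \<in> lan_gen (Plus A) (Plus B) (cplus_ob T c) (cplus_ar T c) (plus_psh D tA P) x"
  shows "lan_eval a t = lan_eval a t'"
proof -
  obtain g f a' where t: "t = (cDom (Plus A) g, f, psh_ar (plus_psh D tA P) g a')"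
      "t' = (cCod (Plus A) g, cCmp (Plus B) f (cplus_ar T c g), a')"
    and g: "g \<in> cAr (Plus A)" and f: "f \<in> cAr (Plus B)" "cCod (Plus B) f = cplus_ob T c (cDom (Plus A) g)"
    and a': "a' \<in> psh_ob (plus_psh D tA P) (cCod (Plus A) g)"
    using assms unfolding lan_gen_def by blast
  obtain x1 \<beta> x2 where g_def: "g = (x1, \<beta>, x2)" by (metis prod_cases3)
  obtain z \<beta>' z' where f_def: "f = (z, \<beta>', z')" by (metis prod_cases3)
  have "\<beta>' \<in> der D tA (fst z) (tA \<beta>') (fst x1)" "\<beta> \<in> der D tA (fst x1) (tA \<beta>) (fst x2)"
    "a' \<in> der D tA (fst x2) (snd x2) P"
    using f g a' g_def f_def by (auto simp: cplus_ob_def split: prod.splits)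
  then show ?thesis
    using t g_def f_def der_assoc by (simp add: lan_eval_def)
qed

lemma lan_extend_class:
  assumes x: "x \<in> cOb (Plus B)" and t: "t \<in> Lan_carrier x"
  shows "lan_extend a x (Lan_equiv x `` {t}) = lan_eval a t"
proof -
  have "t \<in> Lan_equiv x `` {t}" using lan.equiv_lan_equiv t by (rule equiv_class_self)
  then have "(SOME s. s \<in> Lan_equiv x `` {t}) \<in> Lan_equiv x `` {t}" by (rule someI)
  then have "(t, SOME s. s \<in> Lan_equiv x `` {t}) \<in> Lan_equiv x" by simp
  then have "lan_eval a t = lan_eval a (SOME s. s \<in> Lan_equiv x `` {t})"
    unfolding lan_equiv_def by (rule generated_equiv_respects) (erule lan_eval_gen)
  then show ?thesis
    using x t by (simp add: lan_extend_def quotientI)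
qed

lemma lan_eval_act:
  assumes k: "(x1, k\<beta>, x2) \<in> cAr (Plus B)" and t: "t \<in> Lan_carrier x2"
    and a: "a \<in> der D tA P e R"
  shows "lan_eval a (lan.lan_act (x1, k\<beta>, x2) t) = cCmp D k\<beta> (lan_eval a t)"
proof -
  obtain x0 \<beta> a0 where t_def: "t = (x0, (x2, \<beta>, cplus_ob T c x0), a0)" and x0: "x0 \<in> cOb (Plus A)"
    and \<beta>: "(x2, \<beta>, cplus_ob T c x0) \<in> cAr (Plus B)" and a0: "a0 \<in> der D tA (fst x0) (snd x0) P"
    using Lan_carrierE[OF t] by metis
  have k\<beta>: "k\<beta> \<in> der D tA (fst x1) (tA k\<beta>) (fst x2)" using k by simp
  have \<beta>': "\<beta> \<in> der D tA (fst x2) (tA \<beta>) (fst x0)" using \<beta> by (cases x0) simp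
  have "cCmp D (cCmp D (cCmp D k\<beta> \<beta>) a0) a = cCmp D (cCmp D k\<beta> (cCmp D \<beta> a0)) a"
    using der_assoc[OF k\<beta> \<beta>' a0] by simp
  also have "\<dots> = cCmp D k\<beta> (cCmp D (cCmp D \<beta> a0) a)"
    using der_assoc[OF k\<beta> Lan_leg_der(1)[OF \<beta> x0 a0] a] .
  finally show ?thesis
    using t_def by (simp add: lan.lan_act_def lan_eval_def)
qed

lemma lan_extend_in_perp_R:
  assumes y: "y \<in> cOb (Minus B)" and a: "a \<in> der D tA P (cCmp T c (fst y)) (snd y)"
  shows "lan_extend a \<in> nat_trans (Plus B) Lan (der_left D T tA y)"
  unfolding nat_trans_def
proof (intro CollectI conjI ballI allI impI)
  fix x u assume x: "x \<in> cOb (Plus B)" and u: "u \<in> psh_ob Lan x"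
  then obtain t where t: "t \<in> Lan_carrier x" "u = Lan_equiv x `` {t}"
    by (auto elim: quotientE)
  then show "lan_extend a x u \<in> psh_ob (der_left D T tA y) x"
    using lan_extend_class[OF x] lan_eval_der[OF y a] by simp
next
  fix k u assume k: "k \<in> cAr (Plus B)" and u: "u \<in> psh_ob Lan (cCod (Plus B) k)"
  obtain x1 k\<beta> x2 where k_def: "k = (x1, k\<beta>, x2)" by (metis prod_cases3)
  obtain t where t: "t \<in> Lan_carrier x2" "u = Lan_equiv x2 `` {t}"
    using u k_def by (auto elim: quotientE)
  have x: "x1 \<in> cOb (Plus B)" "x2 \<in> cOb (Plus B)" and k\<beta>: "k\<beta> \<in> der D tA (fst x1) (tA k\<beta>) (fst x2)"
    using k k_def by (simp_all only: plus_cat_ar)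
  have "lan_extend a x1 (psh_ar Lan k u) = lan_eval a (lan.lan_act k t)"
    using lan.lan_psh_ar_class[OF k] lan.lan_act_carrier[OF k] lan_extend_class[OF x(1)] t k_def by simp
  also have "\<dots> = cCmp D k\<beta> (lan_eval a t)"
    using lan_eval_act k t a k_def by simp
  also have "\<dots> = psh_ar (der_left D T tA y) k (lan_extend a x2 u)"
    using der_id_right[OF der_comp[OF k\<beta> lan_eval_der[OF y a t(1)]]] lan_extend_class[OF x(2) t(1)]
      t(2) k_def by simp
  finally show "lan_extend a (cDom (Plus B) k) (psh_ar Lan k u) =
      psh_ar (der_left D T tA y) k (lan_extend a (cCod (Plus B) k) u)"
    using k_def by simp
qed (auto simp: lan_extend_def)

lemma id_A_comp_c: "cCmp T (cId T A) c = c"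
  using T_id_left c by blast

lemma P_id_A_ob: "(P, cId T A) \<in> cOb (Plus A)" and P_c_ob: "(P, c) \<in> cOb (Plus B)"
  using P c cat_id[OF T_cat] cat_dom_ob[OF T_cat c] by auto

definition lan_unit_rep :: "('do \<times> 'tm) \<times> (('do \<times> 'tm) \<times> 'dm \<times> ('do \<times> 'tm)) \<times> 'dm" where
  "lan_unit_rep = ((P, cId T A), ((P, c), cId D P, (P, c)), cId D P)"

text \<open>The class of \<open>id\<^sub>P\<close> over \<open>(P, id\<^sub>A)\<close>, i.e. the image of \<open>id\<^sub>P\<close> under the unit
  \<open>P\<^sup>+ \<Rightarrow> (c\<^sup>+)\<^sup>*(c\<^sup>+)\<^sub>!P\<^sup>+\<close>.\<close>

definition lan_unit :: "(('do \<times> 'tm) \<times> (('do \<times> 'tm) \<times> 'dm \<times> ('do \<times> 'tm)) \<times> 'dm) set" where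
  "lan_unit = Lan_equiv (P, c) `` {lan_unit_rep}"

lemma lan_unit_rep_in_Lan_carrier: "lan_unit_rep \<in> Lan_carrier (P, c)"
proof -
  have "cId D P \<in> der D tA P (cId T A) P"
    using der_id[OF P(1)] P(2) by simp
  then show ?thesis
    using P_id_A_ob P_c_ob id_A_comp_c by (simp add: lan_unit_rep_def lan_carrier_def mem_der)
qed

lemma lan_unit_in: "lan_unit \<in> psh_ob Lan (P, c)"
  unfolding lan_unit_def psh_ob_Lan using lan_unit_rep_in_Lan_carrier by (rule quotientI)

lemma lan_extend_unit:
  assumes "a \<in> der D tA P e R"
  shows "lan_extend a (P, c) lan_unit = a"
  unfolding lan_unit_def
  using lan_extend_class[OF P_c_ob lan_unit_rep_in_Lan_carrier] der_id_left[OF der_id[OF P(1)]]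
    der_id_left[OF assms] by (simp add: lan_eval_def lan_unit_rep_def)

lemma Lan_class_eq_act_unit:
  assumes \<beta>: "(x, \<beta>, cplus_ob T c x0) \<in> cAr (Plus B)" and x0: "x0 \<in> cOb (Plus A)"
    and a0: "a0 \<in> der D tA (fst x0) (snd x0) P"
  shows "(x, cCmp D \<beta> a0, (P, c)) \<in> cAr (Plus B)"
    and "Lan_equiv x `` {(x0, (x, \<beta>, cplus_ob T c x0), a0)}
         = psh_ar Lan (x, cCmp D \<beta> a0, (P, c)) lan_unit"
proof -
  let ?k = "(x, cCmp D \<beta> a0, (P, c))"
  have leg: "cCmp D \<beta> a0 \<in> der D tA (fst x) (cCmp T (tA \<beta>) (snd x0)) P"
    and "cCmp T (cCmp T (tA \<beta>) (snd x0)) c = snd x"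
    using Lan_leg_der[OF \<beta> x0 a0] by auto
  moreover have "x \<in> cOb (Plus B)" using \<beta> by (simp only: plus_cat_ar)
  ultimately show k: "?k \<in> cAr (Plus B)"
    using P_c_ob by (simp add: mem_der)
  txt \<open>The generating relation along the arrow \<open>a0 : x0 \<rightarrow> (P, id\<^sub>A)\<close> of \<open>A\<^sup>+\<close>.\<close>
  let ?g0 = "(x0, a0, (P, cId T A))"
  have "cCmp T (tA a0) (cId T A) = snd x0"
    using x0 a0 T_id_right[of "snd x0" A] by (simp add: mem_der)
  then have "?g0 \<in> cAr (Plus A)"
    using x0 a0 P_id_A_ob by (simp add: mem_der)
  then have "((x0, (x, \<beta>, cplus_ob T c x0), cCmp D a0 (cId D P)),
              ((P, cId T A), (x, cCmp D \<beta> a0, cplus_ob T c (P, cId T A)), cId D P))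
             \<in> lan_gen (Plus A) (Plus B) (cplus_ob T c) (cplus_ar T c) (plus_psh D tA P) x"
    unfolding lan_gen_def
    using \<beta> x0 der_id[OF P(1)] P(2) id_A_comp_c
    by (intro CollectI exI[of _ ?g0] exI[of _ "(x, \<beta>, cplus_ob T c x0)"] exI[of _ "cId D P"]) simp
  then have "((x0, (x, \<beta>, cplus_ob T c x0), a0), lan.lan_act ?k lan_unit_rep)
             \<in> lan_gen (Plus A) (Plus B) (cplus_ob T c) (cplus_ar T c) (plus_psh D tA P) x"
    using der_id_right[OF a0] der_id_right[OF leg] id_A_comp_c
    by (simp add: lan.lan_act_def lan_unit_rep_def)
  then have "((x0, (x, \<beta>, cplus_ob T c x0), a0), lan.lan_act ?k lan_unit_rep) \<in> Lan_equiv x"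
    unfolding lan_equiv_def by blast
  then have "Lan_equiv x `` {(x0, (x, \<beta>, cplus_ob T c x0), a0)} = Lan_equiv x `` {lan.lan_act ?k lan_unit_rep}"
    by (rule equiv_class_eq[OF lan.equiv_lan_equiv])
  then show "Lan_equiv x `` {(x0, (x, \<beta>, cplus_ob T c x0), a0)} = psh_ar Lan ?k lan_unit"
    using lan.lan_psh_ar_class[OF k] lan_unit_rep_in_Lan_carrier by (simp add: lan_unit_def)
qed

lemma nat_trans_Lan_eq_lan_extend:
  assumes \<theta>: "\<theta> \<in> nat_trans (Plus B) Lan (der_left D T tA y)" and y: "y \<in> cOb (Minus B)"
  shows "lan_extend (\<theta> (P, c) lan_unit) = \<theta>"
proof (intro ext)
  fix x u
  have a: "\<theta> (P, c) lan_unit \<in> der D tA P (cCmp T c (fst y)) (snd y)"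
    using nat_trans_ob[OF \<theta> P_c_ob lan_unit_in] by simp
  show "lan_extend (\<theta> (P, c) lan_unit) x u = \<theta> x u"
  proof (cases "x \<in> cOb (Plus B) \<and> u \<in> psh_ob Lan x")
    case True
    then obtain t where x: "x \<in> cOb (Plus B)" and t: "t \<in> Lan_carrier x" "u = Lan_equiv x `` {t}"
      by (auto elim: quotientE)
    obtain x0 \<beta> a0 where t_def: "t = (x0, (x, \<beta>, cplus_ob T c x0), a0)" and x0: "x0 \<in> cOb (Plus A)"
      and \<beta>: "(x, \<beta>, cplus_ob T c x0) \<in> cAr (Plus B)" and a0: "a0 \<in> der D tA (fst x0) (snd x0) P"
      using Lan_carrierE[OF t(1)] by metis
    note k = Lan_class_eq_act_unit[OF \<beta> x0 a0]
    have "\<theta> x u = psh_ar (der_left D T tA y) (x, cCmp D \<beta> a0, (P, c)) (\<theta> (P, c) lan_unit)"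
      using nat_trans_ar[OF \<theta> k(1)] lan_unit_in t k(2) t_def by simp
    also have "\<dots> = lan_eval (\<theta> (P, c) lan_unit) t"
      using der_id_right[OF der_comp[OF Lan_leg_der(1)[OF \<beta> x0 a0] a]] t_def by (simp add: lan_eval_def)
    finally show ?thesis
      using lan_extend_class[OF x t(1)] t(2) by simp
  next
    case False
    then show ?thesis using nat_trans_undefined[OF \<theta>] by (auto simp: lan_extend_def)
  qed
qed

lemma lan_extend_comp:
  assumes g: "(y1, \<gamma>, y2) \<in> cAr (Minus B)" and a: "a \<in> der D tA P (cCmp T c (fst y1)) (snd y1)"
  shows "lan_extend (cCmp D a \<gamma>) = psh_ar (perp_R D T tO tA B Lan) (y1, \<gamma>, y2) (lan_extend a)"
proof (intro ext)
  fix x u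
  have \<gamma>: "\<gamma> \<in> der D tA (snd y1) (tA \<gamma>) (snd y2)" and y1: "y1 \<in> cOb (Minus B)"
    using g by simp_all
  show "lan_extend (cCmp D a \<gamma>) x u = psh_ar (perp_R D T tO tA B Lan) (y1, \<gamma>, y2) (lan_extend a) x u"
  proof (cases "x \<in> cOb (Plus B) \<and> u \<in> psh_ob Lan x")
    case True
    then obtain t where x: "x \<in> cOb (Plus B)" and t: "t \<in> Lan_carrier x" "u = Lan_equiv x `` {t}"
      by (auto elim: quotientE)
    obtain x0 \<beta> a0 where t_def: "t = (x0, (x, \<beta>, cplus_ob T c x0), a0)" and x0: "x0 \<in> cOb (Plus A)"
      and \<beta>: "(x, \<beta>, cplus_ob T c x0) \<in> cAr (Plus B)" and a0: "a0 \<in> der D tA (fst x0) (snd x0) P"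
      using Lan_carrierE[OF t(1)] by metis
    have "lan_eval (cCmp D a \<gamma>) t = cCmp D (cCmp D (cId D (fst x)) (lan_eval a t)) \<gamma>"
      using der_assoc[OF Lan_leg_der(1)[OF \<beta> x0 a0] a \<gamma>] der_id_left[OF lan_eval_der[OF y1 a t(1)]]
        t_def by (simp add: lan_eval_def)
    then show ?thesis
      using True lan_extend_class[OF x t(1)] t(2) by simp
  next
    case False
    then show ?thesis by (auto simp: lan_extend_def simp del: plus_cat_ob)
  qed
qed

lemma nat_iso_P_minus_c_perp_R_Lan: "nat_iso (Minus B) P_minus_c (perp_R D T tO tA B Lan)"
  unfolding nat_iso_def
proof (intro exI[of _ "\<lambda>y. lan_extend"] conjI ballI)
  fix y assume y: "y \<in> cOb (Minus B)"
  have "\<theta> (P, c) lan_unit \<in> der D tA P (cCmp T c (fst y)) (snd y)"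
    if "\<theta> \<in> nat_trans (Plus B) Lan (der_left D T tA y)" for \<theta>
    using nat_trans_ob[OF that P_c_ob lan_unit_in] by simp
  then show "bij_betw lan_extend (psh_ob P_minus_c y) (psh_ob (perp_R D T tO tA B Lan) y)"
    using lan_extend_in_perp_R[OF y] lan_extend_unit nat_trans_Lan_eq_lan_extend[OF _ y]
    by (intro bij_betw_byWitness[where f' = "\<lambda>\<theta>. \<theta> (P, c) lan_unit"]) auto
next
  fix g a assume g: "g \<in> cAr (Minus B)" and a: "a \<in> psh_ob P_minus_c (cCod (Minus B) g)"
  obtain y1 \<gamma> y2 where g_def: "g = (y1, \<gamma>, y2)" by (metis prod_cases3)
  show "lan_extend (psh_ar P_minus_c g a) = psh_ar (perp_R D T tO tA B Lan) g (lan_extend a)"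
    using lan_extend_comp g a g_def by simp
qed

theorem nat_iso_plus_psh_pushforward_perp_L_perp_R:
  "nat_iso (Plus B) (plus_psh D tA Pc) (perp_L D T tO tA B (perp_R D T tO tA B Lan))"
  using nat_iso_trans[OF is_category_plus_cat nat_iso_plus_psh_pushforward_perp_L
      nat_iso_perp_L[OF nat_iso_P_minus_c_perp_R_Lan psh_closed_P_minus_c]] .

end

theorem proposition4p13:
  fixes D :: "('do, 'dm) cat" and T :: "('to, 'tm) cat"
    and tO :: "'do \<Rightarrow> 'to" and tA :: "'dm \<Rightarrow> 'tm"
    and A B :: 'to and c :: 'tm and P Pc :: 'do and \<kappa> :: 'dm
  assumes "refinement_system D T tO tA"
    and "c \<in> cAr T" and "cDom T c = A" and "cCod T c = B"
    and "P \<in> cOb D" and "tO P = A"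
    and "is_pushforward D T tO tA P c Pc \<kappa>"
  shows "nat_iso (plus_cat D T tO tA B) (plus_psh D tA Pc)
           (perp_L D T tO tA B (pb_psh (cminus_ob T c) (cminus_ar T c) (minus_psh D tA P)))
       \<and> nat_iso (plus_cat D T tO tA B) (plus_psh D tA Pc)
           (perp_L D T tO tA B (perp_R D T tO tA B
              (lan_psh (plus_cat D T tO tA A) (plus_cat D T tO tA B) (cplus_ob T c) (cplus_ar T c)
                 (plus_psh D tA P))))"
proof -
  interpret pushforward D T tO tA c P Pc \<kappa>
    using assms by unfold_locales auto
  show ?thesis
    unfolding assms(3,4)[symmetric]
    using nat_iso_plus_psh_pushforward_perp_L nat_iso_plus_psh_pushforward_perp_L_perp_R ..
qed

end
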